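(* Fix $T,n_{\mathrm{in}},n_1\in\mathbb{N}$ and an architecture of discrete-time LIF-SNN (direct encoding, membrane potential output) with latency $T$, input dimension $n_{\mathrm{in}}$, $L$ hidden layers of widths $n_1,\dots,n_L$ and output dimension $n_{\mathrm{out}}$. Let $\theta$ range over all choices of the network parameters (weights, biases, initial membrane potentials, leaks, thresholds and decoder parameters). Then $\max_\theta|\mathcal{C}|\le\max_\theta|\mathcal{R}|\le B$, where $B=\sum_{i=0}^{n_{\mathrm{in}}}\big(\frac{T^2+T}{2}\big)^i\binom{n_1}{i}$ if $n_1\ge n_{\mathrm{in}}$ and $B=\big(\frac{T^2+T+2}{2}\big)^{n_1}$ otherwise. The first inequality becomes an equality if each hidden (spike) layer has at least $n_1$ neurons. The second inequality becomes an equality for appropriate choices of the network parameters $\theta$.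
   Context: A discrete-time LIF-SNN $\Phi$ with parameters $W^\ell\in\mathbb{R}^{n_\ell\times n_{\ell-1}}$, $b^\ell\in\mathbb{R}^{n_\ell}$, $u^\ell(0)\in\mathbb{R}^{n_\ell}$, $\beta^\ell\in[0,1]$, $\vartheta^\ell>0$ ($\ell\in[L]$, $n_0=n_{\mathrm{in}}$) and direct encoding computes, for input $x$, with $s^0(t)=x$ for all $t\in[T]$: $s^\ell(t)=H(\beta^\ell u^\ell(t-1)+W^\ell s^{\ell-1}(t)+b^\ell-\vartheta^\ell\mathbf{1})$, $u^\ell(t)=\beta^\ell u^\ell(t-1)+W^\ell s^{\ell-1}(t)+b^\ell-\vartheta^\ell s^\ell(t)$ for $\ell\in[L]$, $t\in[T]$, with $H$ the entrywise Heaviside function ($H(z)=1$ iff $z\ge0$). Membrane potential output: $R(\Phi)(x)=\sum_{t=1}^Ta_t(Vs^L(t)+c)$ with $a\in\mathbb{R}^T$, $V\in\mathbb{R}^{n_{\mathrm{out}}\times n_L}$, $c\in\mathbb{R}^{n_{\mathrm{out}}}$. The activation pattern of $x$ is $\mathcal{A}(x)=(s^1(t;x))_{t\in[T]}\in\{0,1\}^{n_1\times T}$ (first hidden layer spikes). $\mathcal{R}$ is the set of activation regions, i.e. the nonempty sets $\{x\in\mathbb{R}^{n_{\mathrm{in}}}:\mathcal{A}(x)=A\}$, $A\in\{0,1\}^{n_1\times T}$; $\mathcal{C}$ is the set of constant regions, i.e. the nonempty sets $\{x:R(\Phi)(x)=y\}$, $y\in\mathbb{R}^{n_{\mathrm{out}}}$.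 Both depend on $\theta$. *)

theory Defs
  imports Complex_Main
begin

text \<open>Parameters theta of a discrete-time LIF-SNN. Layers are indexed 1..L,
  neurons within layer l by 0..<n_l, time steps by 1..T.  Entries outside these
  index ranges are irrelevant to the computation.\<close>

record snn_params =
  snn_W :: "nat \<Rightarrow> nat \<Rightarrow> nat \<Rightarrow> real"   \<comment> \<open>layer l, row i, column j\<close>
  snn_b :: "nat \<Rightarrow> nat \<Rightarrow> real"
  snn_u0 :: "nat \<Rightarrow> nat \<Rightarrow> real"
  snn_beta :: "nat \<Rightarrow> real"
  snn_thr :: "nat \<Rightarrow> real"
  snn_a :: "nat \<Rightarrow> real"
  snn_V :: "nat \<Rightarrow> nat \<Rightarrow> real"
  snn_c :: "nat \<Rightarrow> real"

definition snn_valid :: "nat list \<Rightarrow> snn_params \<Rightarrow> bool" where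
  "snn_valid ns P \<longleftrightarrow>
     (\<forall>l\<in>{1..length ns}. 0 \<le> snn_beta P l \<and> snn_beta P l \<le> 1 \<and> 0 < snn_thr P l)"

definition width :: "nat \<Rightarrow> nat list \<Rightarrow> nat \<Rightarrow> nat" where
  "width n_in ns l = (if l = 0 then n_in else ns ! (l - 1))"

definition heaviside :: "real \<Rightarrow> real" where
  "heaviside z = (if 0 \<le> z then 1 else 0)"

text \<open>snn_st P n_in ns x l t = (s^l(t), u^l(t)) for input x (direct encoding).\<close>
fun snn_st :: "snn_params \<Rightarrow> nat \<Rightarrow> nat list \<Rightarrow> real list \<Rightarrow> nat \<Rightarrow> nat
                \<Rightarrow> (nat \<Rightarrow> real) \<times> (nat \<Rightarrow> real)" where
  "snn_st P n_in ns x 0 t = ((\<lambda>j. x ! j), (\<lambda>_. 0))"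
| "snn_st P n_in ns x (Suc l) 0 = ((\<lambda>_. 0), snn_u0 P (Suc l))"
| "snn_st P n_in ns x (Suc l) (Suc t) =
     (let up = snd (snn_st P n_in ns x (Suc l) t);
          sp = fst (snn_st P n_in ns x l (Suc t));
          pre = (\<lambda>i. snn_beta P (Suc l) * up i
                     + (\<Sum>j<width n_in ns l. snn_W P (Suc l) i j * sp j)
                     + snn_b P (Suc l) i);
          s = (\<lambda>i. heaviside (pre i - snn_thr P (Suc l)))
      in (s, (\<lambda>i. pre i - snn_thr P (Suc l) * s i)))"

definition snn_inputs :: "nat \<Rightarrow> real list set" where
  "snn_inputs n_in = {x. length x = n_in}"

definition snn_pattern :: "snn_params \<Rightarrow> nat \<Rightarrow> nat list \<Rightarrow> nat \<Rightarrow> real list \<Rightarrow> nat \<Rightarrow> nat \<Rightarrow> real" where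
  "snn_pattern P n_in ns T x =
     (\<lambda>t i. if 1 \<le> t \<and> t \<le> T \<and> i < hd ns then fst (snn_st P n_in ns x 1 t) i else 0)"

definition snn_output :: "snn_params \<Rightarrow> nat \<Rightarrow> nat list \<Rightarrow> nat \<Rightarrow> nat \<Rightarrow> real list \<Rightarrow> nat \<Rightarrow> real" where
  "snn_output P n_in ns n_out T x =
     (\<lambda>k. if k < n_out then
            (\<Sum>t=1..T. snn_a P t *
               ((\<Sum>j<last ns. snn_V P k j * fst (snn_st P n_in ns x (length ns) t) j) + snn_c P k))
          else 0)"

definition activation_regions :: "snn_params \<Rightarrow> nat \<Rightarrow> nat list \<Rightarrow> nat \<Rightarrow> real list set set" where
  "activation_regions P n_in ns T =
     {S. \<exists>A. S = {x \<in> snn_inputs n_in. snn_pattern P n_in ns T x = A} \<and> S \<noteq> {}}"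

definition constant_regions :: "snn_params \<Rightarrow> nat \<Rightarrow> nat list \<Rightarrow> nat \<Rightarrow> nat \<Rightarrow> real list set set" where
  "constant_regions P n_in ns n_out T =
     {S. \<exists>y. S = {x \<in> snn_inputs n_in. snn_output P n_in ns n_out T x = y} \<and> S \<noteq> {}}"

definition max_activation_regions :: "nat \<Rightarrow> nat list \<Rightarrow> nat \<Rightarrow> nat" where
  "max_activation_regions n_in ns T =
     Max {card (activation_regions P n_in ns T) | P. snn_valid ns P}"

definition max_constant_regions :: "nat \<Rightarrow> nat list \<Rightarrow> nat \<Rightarrow> nat \<Rightarrow> nat" where
  "max_constant_regions n_in ns n_out T =
     Max {card (constant_regions P n_in ns n_out T) | P. snn_valid ns P}"

definition region_bound :: "nat \<Rightarrow> nat \<Rightarrow> nat \<Rightarrow> real" where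
  "region_bound T n_in n1 =
     (if n1 \<ge> n_in
      then (\<Sum>i=0..n_in. ((real T ^ 2 + real T) / 2) ^ i * real (n1 choose i))
      else ((real T ^ 2 + real T + 2) / 2) ^ n1)"

end

(* Every first-layer neuron receives the constant input z = W x + b. Raising z changes its spike
   train monotonically in the lexicographic order, and the train can only switch where the spike
   count increases, at most once for each count; so the train is a monotone step function of z
   with at most K = T (T + 1) / 2 jumps. The activation pattern of x is therefore determined by the
   position of x relative to n_1 families of K parallel hyperplanes, and such an arrangement in
   R^n_in has at most sum_i K^i (n_1 choose i) cells, which is the stated bound in both cases.
   With leak and threshold 1 and initial potential 1 / (T + 2) the jumps lie at the K distinct
   points (j - 1 / (T + 2)) / t, and first-layer weights i^j place the hyperplane families in
   general position (their normals lie on the moment curve), so that every cell is realised.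
   The output depends on x only through the activation pattern; if all hidden layers have at
   least n_1 neurons, the first-layer spikes can be relayed unchanged to the last layer and read
   out injectively as binary digits, so that constant and activation regions coincide. *)

theory Submission
  imports Defs "HOL-Computational_Algebra.Polynomial"
begin

section \<open>A leaky integrate-and-fire neuron with constant input\<close>

fun lif_potential :: "real \<Rightarrow> real \<Rightarrow> real \<Rightarrow> real \<Rightarrow> nat \<Rightarrow> real" where
  "lif_potential \<beta> \<theta> u0 z 0 = u0"
| "lif_potential \<beta> \<theta> u0 z (Suc t) =
     (if \<theta> \<le> \<beta> * lif_potential \<beta> \<theta> u0 z t + z then \<beta> * lif_potential \<beta> \<theta> u0 z t + z - \<theta>
      else \<beta> * lif_potential \<beta> \<theta> u0 z t + z)"

text \<open>\<open>lif_fires \<beta> \<theta> u0 z t\<close> is the spike emitted at time \<open>t + 1\<close>.\<close>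

definition lif_fires :: "real \<Rightarrow> real \<Rightarrow> real \<Rightarrow> real \<Rightarrow> nat \<Rightarrow> bool" where
  "lif_fires \<beta> \<theta> u0 z t \<longleftrightarrow> \<theta> \<le> \<beta> * lif_potential \<beta> \<theta> u0 z t + z"

fun lif_spike_count :: "real \<Rightarrow> real \<Rightarrow> real \<Rightarrow> real \<Rightarrow> nat \<Rightarrow> nat" where
  "lif_spike_count \<beta> \<theta> u0 z 0 = 0"
| "lif_spike_count \<beta> \<theta> u0 z (Suc t) =
     lif_spike_count \<beta> \<theta> u0 z t + (if lif_fires \<beta> \<theta> u0 z t then 1 else 0)"

text \<open>The spike train of length \<open>t\<close> read as a binary number, first spike most significant:
  the numerical order of codes is the lexicographic order of spike trains.\<close>

fun lif_spike_code :: "real \<Rightarrow> real \<Rightarrow> real \<Rightarrow> real \<Rightarrow> nat \<Rightarrow> nat" where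
  "lif_spike_code \<beta> \<theta> u0 z 0 = 0"
| "lif_spike_code \<beta> \<theta> u0 z (Suc t) =
     2 * lif_spike_code \<beta> \<theta> u0 z t + (if lif_fires \<beta> \<theta> u0 z t then 1 else 0)"

lemma lif_spike_count_le: "lif_spike_count \<beta> \<theta> u0 z t \<le> t"
  by (induction t) auto

lemma lif_spike_code_less: "lif_spike_code \<beta> \<theta> u0 z t < 2 ^ t"
  by (induction t) auto

lemma finite_range_lif_spike_code: "finite (range (\<lambda>z. lif_spike_code \<beta> \<theta> u0 z t))"
  by (rule finite_subset[of _ "{..<2^t}"]) (auto simp: lif_spike_code_less)

text \<open>The second conjunct is the induction invariant: the larger input falls behind in potential
  by at most \<open>\<theta>\<close> per extra spike.\<close>

lemma lif_spike_count_mono: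
  assumes "0 \<le> \<beta>" "\<beta> \<le> 1" "0 \<le> \<theta>" "z \<le> z'"
  shows "lif_spike_count \<beta> \<theta> u0 z t \<le> lif_spike_count \<beta> \<theta> u0 z' t \<and>
         lif_potential \<beta> \<theta> u0 z' t - lif_potential \<beta> \<theta> u0 z t
           \<ge> - \<theta> * (real (lif_spike_count \<beta> \<theta> u0 z' t) - real (lif_spike_count \<beta> \<theta> u0 z t))"
proof (induction t)
  case 0
  then show ?case by simp
next
  case (Suc t)
  define u where "u = lif_potential \<beta> \<theta> u0 z t"
  define u' where "u' = lif_potential \<beta> \<theta> u0 z' t"
  define D where "D = real (lif_spike_count \<beta> \<theta> u0 z' t) - real (lif_spike_count \<beta> \<theta> u0 z t)"
  have D: "D \<ge> 0" and IH: "u' - u \<ge> - \<theta> * D"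
    using Suc by (simp_all add: u_def u'_def D_def)
  have "\<beta> * (- \<theta> * D) \<le> \<beta> * (u' - u)"
    using IH assms by (intro mult_left_mono) auto
  moreover have "\<beta> * (\<theta> * D) \<le> \<theta> * D"
    using D assms by (metis mult_left_le_one_le mult_nonneg_nonneg)
  ultimately have gap: "(\<beta> * u' + z') - (\<beta> * u + z) \<ge> - \<theta> * D"
    using assms by (simp add: algebra_simps)
  note simps = lif_fires_def u_def u'_def D_def algebra_simps
  show ?case
  proof (cases "\<theta> \<le> \<beta> * u + z"; cases "\<theta> \<le> \<beta> * u' + z'")
    assume "\<theta> \<le> \<beta> * u + z" "\<theta> \<le> \<beta> * u' + z'"
    then show ?thesis using Suc gap by (simp add: simps)
  next
    assume fire: "\<theta> \<le> \<beta> * u + z" and no_fire: "\<not> \<theta> \<le> \<beta> * u' + z'"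
    then have "D \<noteq> 0" using gap by auto
    then have "lif_spike_count \<beta> \<theta> u0 z t < lif_spike_count \<beta> \<theta> u0 z' t"
      using Suc by (auto simp: D_def)
    then show ?thesis using fire no_fire gap assms by (simp add: simps)
  next
    assume "\<not> \<theta> \<le> \<beta> * u + z" "\<theta> \<le> \<beta> * u' + z'"
    then show ?thesis using Suc gap assms by (simp add: simps)
  next
    assume "\<not> \<theta> \<le> \<beta> * u + z" "\<not> \<theta> \<le> \<beta> * u' + z'"
    then show ?thesis using Suc gap by (simp add: simps)
  qed
qed

lemma lif_spike_code_Suc_eqD:
  assumes "lif_spike_code \<beta> \<theta> u0 z (Suc t) = lif_spike_code \<beta> \<theta> u0 z' (Suc t)"
  shows "lif_spike_code \<beta> \<theta> u0 z t = lif_spike_code \<beta> \<theta> u0 z' t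
         \<and> (lif_fires \<beta> \<theta> u0 z t \<longleftrightarrow> lif_fires \<beta> \<theta> u0 z' t)"
  using assms by (auto split: if_splits) presburger+

lemma lif_spike_code_eq_imp_count_eq:
  "lif_spike_code \<beta> \<theta> u0 z t = lif_spike_code \<beta> \<theta> u0 z' t \<Longrightarrow>
   lif_spike_count \<beta> \<theta> u0 z t = lif_spike_count \<beta> \<theta> u0 z' t"
proof (induction t)
  case (Suc t)
  then show ?case using lif_spike_code_Suc_eqD[OF Suc.prems] by simp
qed simp

lemma lif_spike_code_eq_imp_fires_eq:
  "lif_spike_code \<beta> \<theta> u0 z t = lif_spike_code \<beta> \<theta> u0 z' t \<Longrightarrow> k < t \<Longrightarrow>
   lif_fires \<beta> \<theta> u0 z k \<longleftrightarrow> lif_fires \<beta> \<theta> u0 z' k"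
proof (induction t)
  case (Suc t)
  then show ?case using lif_spike_code_Suc_eqD[OF Suc.prems(1)] by (auto simp: less_Suc_eq)
qed simp

lemma lif_spike_code_mono:
  assumes "0 \<le> \<beta>" "\<beta> \<le> 1" "0 \<le> \<theta>" "z \<le> z'"
  shows "lif_spike_code \<beta> \<theta> u0 z t \<le> lif_spike_code \<beta> \<theta> u0 z' t"
proof (induction t)
  case 0
  then show ?case by simp
next
  case (Suc t)
  show ?case
  proof (cases "lif_spike_code \<beta> \<theta> u0 z t = lif_spike_code \<beta> \<theta> u0 z' t")
    case True
    then have "lif_spike_count \<beta> \<theta> u0 z t = lif_spike_count \<beta> \<theta> u0 z' t"
      by (rule lif_spike_code_eq_imp_count_eq)
    then have "lif_potential \<beta> \<theta> u0 z t \<le> lif_potential \<beta> \<theta> u0 z' t"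
      using lif_spike_count_mono[OF assms, of u0 t] by simp
    then have "\<beta> * lif_potential \<beta> \<theta> u0 z t + z \<le> \<beta> * lif_potential \<beta> \<theta> u0 z' t + z'"
      using assms by (meson add_mono mult_left_mono)
    then show ?thesis using True by (auto simp: lif_fires_def)
  qed (use Suc in auto)
qed

text \<open>Raising the input can switch a spike train from firing at time \<open>t + 1\<close> to not firing only
  by an extra earlier spike; hence a code at which both continuations occur is determined by
  its spike count.\<close>

lemma lif_spike_count_split_codes_neq:
  assumes "0 \<le> \<beta>" "\<beta> \<le> 1" "0 \<le> \<theta>"
    and "lif_fires \<beta> \<theta> u0 z1 t" "\<not> lif_fires \<beta> \<theta> u0 z2 t"
    and "lif_spike_code \<beta> \<theta> u0 z1 t < lif_spike_code \<beta> \<theta> u0 z2 t"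
  shows "lif_spike_count \<beta> \<theta> u0 z1 t \<noteq> lif_spike_count \<beta> \<theta> u0 z2 t"
proof
  assume eq: "lif_spike_count \<beta> \<theta> u0 z1 t = lif_spike_count \<beta> \<theta> u0 z2 t"
  have "z1 < z2"
  proof (rule ccontr)
    assume "\<not> z1 < z2"
    then have "lif_spike_code \<beta> \<theta> u0 z2 t \<le> lif_spike_code \<beta> \<theta> u0 z1 t"
      by (intro lif_spike_code_mono assms(1-3)) simp
    then show False using assms(6) by simp
  qed
  then have "lif_spike_count \<beta> \<theta> u0 z1 (Suc t) \<le> lif_spike_count \<beta> \<theta> u0 z2 (Suc t)"
    using lif_spike_count_mono[OF assms(1-3), of z1 z2 u0 "Suc t"] by simp
  then show False using eq assms(4,5) by simp
qed

lemma card_lif_split_codes_le: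
  assumes "0 \<le> \<beta>" "\<beta> \<le> 1" "0 \<le> \<theta>"
  shows "card {c. (\<exists>z. lif_spike_code \<beta> \<theta> u0 z t = c \<and> lif_fires \<beta> \<theta> u0 z t)
                \<and> (\<exists>z. lif_spike_code \<beta> \<theta> u0 z t = c \<and> \<not> lif_fires \<beta> \<theta> u0 z t)} \<le> t + 1"
    (is "card ?S \<le> _")
proof -
  define count_of where
    "count_of c = lif_spike_count \<beta> \<theta> u0 (SOME z. lif_spike_code \<beta> \<theta> u0 z t = c) t" for c
  have count_of: "count_of (lif_spike_code \<beta> \<theta> u0 z t) = lif_spike_count \<beta> \<theta> u0 z t" for z
  proof -
    have "lif_spike_code \<beta> \<theta> u0 (SOME z'. lif_spike_code \<beta> \<theta> u0 z' t = lif_spike_code \<beta> \<theta> u0 z t) t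
        = lif_spike_code \<beta> \<theta> u0 z t"
      by (rule someI[where P = "\<lambda>z'. lif_spike_code \<beta> \<theta> u0 z' t = lif_spike_code \<beta> \<theta> u0 z t"])
        (rule refl)
    then show ?thesis unfolding count_of_def by (rule lif_spike_code_eq_imp_count_eq)
  qed
  have no_split: False
    if less: "c1 < c2" and c1: "c1 \<in> ?S" and c2: "c2 \<in> ?S" and eq: "count_of c1 = count_of c2"
    for c1 c2
  proof -
    obtain z1 where z1: "lif_spike_code \<beta> \<theta> u0 z1 t = c1" "lif_fires \<beta> \<theta> u0 z1 t"
      using c1[unfolded mem_Collect_eq] by blast
    obtain z2 where z2: "lif_spike_code \<beta> \<theta> u0 z2 t = c2" "\<not> lif_fires \<beta> \<theta> u0 z2 t"
      using c2[unfolded mem_Collect_eq] by blast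
    have "lif_spike_count \<beta> \<theta> u0 z1 t = lif_spike_count \<beta> \<theta> u0 z2 t"
      using eq count_of[of z1] count_of[of z2] z1(1) z2(1) by simp
    then show False
      using lif_spike_count_split_codes_neq[OF assms z1(2) z2(2)] z1(1) z2(1) less by simp
  qed
  have "inj_on count_of ?S"
  proof (rule inj_onI)
    fix c1 c2 assume "c1 \<in> ?S" "c2 \<in> ?S" "count_of c1 = count_of c2"
    then show "c1 = c2"
      using no_split[of c1 c2] no_split[of c2 c1] by (cases c1 c2 rule: linorder_cases) auto
  qed
  then have "card ?S = card (count_of ` ?S)" by (simp add: card_image)
  also have "\<dots> \<le> card {0..t}"
  proof (rule card_mono)
    show "count_of ` ?S \<subseteq> {0..t}" unfolding count_of_def using lif_spike_count_le by auto
  qed simp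
  finally show ?thesis by simp
qed

lemma card_range_lif_spike_code_le:
  assumes "0 \<le> \<beta>" "\<beta> \<le> 1" "0 \<le> \<theta>"
  shows "card (range (\<lambda>z. lif_spike_code \<beta> \<theta> u0 z t)) \<le> 1 + t * (t + 1) div 2"
proof (induction t)
  case 0
  have "range (\<lambda>z. lif_spike_code \<beta> \<theta> u0 z 0) = {0}" by auto
  then show ?case by simp
next
  case (Suc t)
  let ?code = "\<lambda>z. lif_spike_code \<beta> \<theta> u0 z t"
  define Z0 where "Z0 = {c. \<exists>z. ?code z = c \<and> \<not> lif_fires \<beta> \<theta> u0 z t}"
  define Z1 where "Z1 = {c. \<exists>z. ?code z = c \<and> lif_fires \<beta> \<theta> u0 z t}"
  have range_eq: "range ?code = Z0 \<union> Z1" unfolding Z0_def Z1_def by auto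
  then have fin: "finite Z0" "finite Z1"
    using finite_range_lif_spike_code[of \<beta> \<theta> u0 t] by simp_all
  have "range (\<lambda>z. lif_spike_code \<beta> \<theta> u0 z (Suc t)) \<subseteq> (\<lambda>c. 2 * c) ` Z0 \<union> (\<lambda>c. 2 * c + 1) ` Z1"
  proof (rule image_subsetI)
    fix z
    have "?code z \<in> (if lif_fires \<beta> \<theta> u0 z t then Z1 else Z0)"
      unfolding Z0_def Z1_def by auto
    then show "lif_spike_code \<beta> \<theta> u0 z (Suc t) \<in> (\<lambda>c. 2 * c) ` Z0 \<union> (\<lambda>c. 2 * c + 1) ` Z1"
      by (auto split: if_splits)
  qed
  then have "card (range (\<lambda>z. lif_spike_code \<beta> \<theta> u0 z (Suc t)))
      \<le> card ((\<lambda>c. 2 * c) ` Z0 \<union> (\<lambda>c. 2 * c + 1) ` Z1)"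
    using fin by (intro card_mono) auto
  also have "\<dots> \<le> card ((\<lambda>c. 2 * c) ` Z0) + card ((\<lambda>c. 2 * c + 1) ` Z1)"
    by (rule card_Un_le)
  also have "\<dots> \<le> card Z0 + card Z1" by (intro add_mono card_image_le fin)
  also have "\<dots> = card (range ?code) + card (Z0 \<inter> Z1)"
    using card_Un_Int[OF fin] range_eq by simp
  also have "card (Z0 \<inter> Z1) \<le> t + 1"
    using card_lif_split_codes_le[OF assms, of u0 t] unfolding Z0_def Z1_def
    by (simp add: conj_commute Int_def)
  finally show ?case using Suc by simp
qed

text \<open>Ranking the achievable codes turns the spike train into a monotone step function with values
  in \<open>{0..T (T + 1) div 2}\<close>.\<close>

definition lif_code_rank :: "real \<Rightarrow> real \<Rightarrow> real \<Rightarrow> nat \<Rightarrow> real \<Rightarrow> nat" where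
  "lif_code_rank \<beta> \<theta> u0 T z =
     card {c \<in> range (\<lambda>z. lif_spike_code \<beta> \<theta> u0 z T). c < lif_spike_code \<beta> \<theta> u0 z T}"

lemma mono_lif_code_rank:
  assumes "0 \<le> \<beta>" "\<beta> \<le> 1" "0 \<le> \<theta>"
  shows "mono (lif_code_rank \<beta> \<theta> u0 T)"
proof (rule monoI)
  fix z z' :: real
  assume "z \<le> z'"
  then have "lif_spike_code \<beta> \<theta> u0 z T \<le> lif_spike_code \<beta> \<theta> u0 z' T"
    using lif_spike_code_mono assms by blast
  then show "lif_code_rank \<beta> \<theta> u0 T z \<le> lif_code_rank \<beta> \<theta> u0 T z'"
    unfolding lif_code_rank_def
    by (intro card_mono) (auto intro: finite_subset[OF _ finite_range_lif_spike_code])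
qed

lemma lif_code_rank_le:
  assumes "0 \<le> \<beta>" "\<beta> \<le> 1" "0 \<le> \<theta>"
  shows "lif_code_rank \<beta> \<theta> u0 T z \<le> T * (T + 1) div 2"
proof -
  have "lif_code_rank \<beta> \<theta> u0 T z < card (range (\<lambda>z. lif_spike_code \<beta> \<theta> u0 z T))"
    unfolding lif_code_rank_def by (intro psubset_card_mono finite_range_lif_spike_code) auto
  then show ?thesis using card_range_lif_spike_code_le[OF assms, of u0 T] by simp
qed

lemma lif_code_rank_eq_imp_code_eq:
  assumes "lif_code_rank \<beta> \<theta> u0 T z = lif_code_rank \<beta> \<theta> u0 T z'"
  shows "lif_spike_code \<beta> \<theta> u0 z T = lif_spike_code \<beta> \<theta> u0 z' T"
proof -
  have rank_less: "lif_code_rank \<beta> \<theta> u0 T za < lif_code_rank \<beta> \<theta> u0 T zb"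
    if "lif_spike_code \<beta> \<theta> u0 za T < lif_spike_code \<beta> \<theta> u0 zb T" for za zb
    unfolding lif_code_rank_def using that
    by (intro psubset_card_mono) (auto intro: finite_subset[OF _ finite_range_lif_spike_code])
  show ?thesis using rank_less[of z z'] rank_less[of z' z] assms by (metis linorder_neq_iff)
qed

section \<open>Level patterns of monotone step functions of affine forms\<close>

definition affine_in :: "nat set \<Rightarrow> ((nat \<Rightarrow> real) \<Rightarrow> real) \<Rightarrow> bool" where
  "affine_in I f \<longleftrightarrow> (\<exists>a c. \<forall>y. f y = (\<Sum>j\<in>I. a j * y j) + c)"

definition level_pattern :: "(nat \<Rightarrow> real \<Rightarrow> nat) \<Rightarrow> (nat \<Rightarrow> 'a \<Rightarrow> real) \<Rightarrow> nat \<Rightarrow> 'a \<Rightarrow> nat list" where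
  "level_pattern h f n y = map (\<lambda>i. h i (f i y)) [0..<n]"

text \<open>The number of regions cut out of \<open>\<real>^d\<close> by \<open>n\<close> families of \<open>K\<close> parallel hyperplanes in
  general position.\<close>

definition arrangement_bound :: "nat \<Rightarrow> nat \<Rightarrow> nat \<Rightarrow> nat" where
  "arrangement_bound K d n = (\<Sum>j\<le>d. K ^ j * (n choose j))"

lemma arrangement_bound_0_right [simp]: "arrangement_bound K d 0 = 1"
  unfolding arrangement_bound_def by (induction d) auto

lemma arrangement_bound_0_middle [simp]: "arrangement_bound K 0 n = 1"
  unfolding arrangement_bound_def by simp

lemma arrangement_bound_Suc_Suc:
  "arrangement_bound K (Suc d) (Suc n) = arrangement_bound K (Suc d) n + K * arrangement_bound K d n"
proof -
  have "arrangement_bound K (Suc d) (Suc n)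
      = 1 + (\<Sum>j\<le>d. K ^ Suc j * (n choose Suc j)) + (\<Sum>j\<le>d. K ^ Suc j * (n choose j))"
    unfolding arrangement_bound_def by (subst sum.atMost_Suc_shift) (simp add: algebra_simps sum.distrib)
  also have "1 + (\<Sum>j\<le>d. K ^ Suc j * (n choose Suc j)) = arrangement_bound K (Suc d) n"
    unfolding arrangement_bound_def by (subst sum.atMost_Suc_shift) simp
  also have "(\<Sum>j\<le>d. K ^ Suc j * (n choose j)) = K * arrangement_bound K d n"
    unfolding arrangement_bound_def by (simp add: sum_distrib_left algebra_simps)
  finally show ?thesis .
qed

lemma arrangement_bound_le_Suc: "arrangement_bound K d n \<le> arrangement_bound K d (Suc n)"
  unfolding arrangement_bound_def
proof (intro sum_mono mult_left_mono)
  show "n choose j \<le> Suc n choose j" for j by (cases j) auto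
qed simp

lemma level_pattern_Suc: "level_pattern h f (Suc n) = (\<lambda>y. level_pattern h f n y @ [h n (f n y)])"
  unfolding level_pattern_def by auto

lemma level_pattern_eq_iff:
  "level_pattern h f n y = level_pattern h f n y' \<longleftrightarrow> (\<forall>i<n. h i (f i y) = h i (f i y'))"
  unfolding level_pattern_def by auto

lemma finite_level_patterns:
  assumes "\<And>i v. i < n \<Longrightarrow> h i v \<le> (K::nat)"
  shows "finite (level_pattern h f n ` E)"
proof (rule finite_subset)
  show "level_pattern h f n ` E \<subseteq> {xs. set xs \<subseteq> {0..K} \<and> length xs = n}"
    using assms by (auto simp: level_pattern_def)
qed (rule finite_lists_length_eq, simp)

lemma card_image_snoc:
  assumes "finite (p ` E)" "\<And>\<tau>. finite {q y |y. y \<in> E \<and> p y = \<tau>}"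
  shows "card ((\<lambda>y. p y @ [q y]) ` E) = (\<Sum>\<tau>\<in>p ` E. card {q y |y. y \<in> E \<and> p y = \<tau>})"
proof -
  have "(\<lambda>y. p y @ [q y]) ` E = (\<Union>\<tau>\<in>p ` E. (\<lambda>v. \<tau> @ [v]) ` {q y |y. y \<in> E \<and> p y = \<tau>})"
  proof (intro equalityI subsetI)
    fix w assume "w \<in> (\<lambda>y. p y @ [q y]) ` E"
    then obtain y where "y \<in> E" "w = p y @ [q y]" by blast
    then show "w \<in> (\<Union>\<tau>\<in>p ` E. (\<lambda>v. \<tau> @ [v]) ` {q y |y. y \<in> E \<and> p y = \<tau>})"
      by (intro UN_I[of "p y"] image_eqI[of _ _ "q y"]) auto
  next
    fix w assume "w \<in> (\<Union>\<tau>\<in>p ` E. (\<lambda>v. \<tau> @ [v]) ` {q y |y. y \<in> E \<and> p y = \<tau>})"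
    then obtain \<tau> v where "\<tau> \<in> p ` E" "v \<in> {q y |y. y \<in> E \<and> p y = \<tau>}" "w = \<tau> @ [v]"
      by blast
    then obtain y where "y \<in> E" "p y = \<tau>" "v = q y" by blast
    then show "w \<in> (\<lambda>y. p y @ [q y]) ` E" using \<open>w = \<tau> @ [v]\<close> by (intro rev_image_eqI[of y]) auto
  qed
  also have "card \<dots> = (\<Sum>\<tau>\<in>p ` E. card ((\<lambda>v. \<tau> @ [v]) ` {q y |y. y \<in> E \<and> p y = \<tau>}))"
    using assms by (intro card_UN_disjoint) auto
  also have "\<dots> = (\<Sum>\<tau>\<in>p ` E. card {q y |y. y \<in> E \<and> p y = \<tau>})"
    by (intro sum.cong refl card_image) (auto simp: inj_on_def)
  finally show ?thesis .
qed

lemma sum_card_filter_swap: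
  assumes "finite A" "finite B"
  shows "(\<Sum>x\<in>A. card {y\<in>B. P x y}) = (\<Sum>y\<in>B. card {x\<in>A. P x y})"
proof -
  have card_eq: "card {y\<in>X. Q y} = (\<Sum>y\<in>X. if Q y then 1 else 0)" if "finite X" for X and Q :: "'c \<Rightarrow> bool"
    using that by (simp add: sum.If_cases Int_def)
  show ?thesis using assms by (simp add: card_eq sum.swap[of _ B A])
qed

lemma affine_in_segment:
  assumes "affine_in I f"
  shows "f (\<lambda>j. y1 j + t * (y2 j - y1 j)) = f y1 + t * (f y2 - f y1)"
proof -
  obtain a c where f: "\<And>y. f y = (\<Sum>j\<in>I. a j * y j) + c"
    using assms unfolding affine_in_def by blast
  show ?thesis
    unfolding f by (simp add: algebra_simps sum.distrib sum_distrib_left sum_subtractf)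
qed

text \<open>Restriction to the hyperplane \<open>\<Sum>j\<in>I. a j * y j = C\<close>, parametrised by eliminating the
  coordinate \<open>j0\<close>.\<close>

lemma affine_in_substitute:
  assumes "affine_in I g" "finite I" "j0 \<in> I" "a j0 \<noteq> 0"
  shows "affine_in (I - {j0}) (\<lambda>y. g (y(j0 := (C - (\<Sum>j\<in>I - {j0}. a j * y j)) / a j0)))"
proof -
  obtain b c where g: "\<And>y. g y = (\<Sum>j\<in>I. b j * y j) + c"
    using assms unfolding affine_in_def by blast
  show ?thesis
    unfolding affine_in_def
  proof (intro exI allI)
    fix y
    let ?y = "y(j0 := (C - (\<Sum>j\<in>I - {j0}. a j * y j)) / a j0)"
    have "(\<Sum>j\<in>I. b j * ?y j) = b j0 * ?y j0 + (\<Sum>j\<in>I - {j0}. b j * ?y j)"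
      using assms by (simp add: sum.remove)
    also have "(\<Sum>j\<in>I - {j0}. b j * ?y j) = (\<Sum>j\<in>I - {j0}. b j * y j)"
      by (rule sum.cong) auto
    finally have "(\<Sum>j\<in>I. b j * ?y j)
        = b j0 * ((C - (\<Sum>j\<in>I - {j0}. a j * y j)) / a j0) + (\<Sum>j\<in>I - {j0}. b j * y j)"
      by simp
    moreover have "(\<Sum>j\<in>I - {j0}. (b j - b j0 * a j / a j0) * y j)
        = (\<Sum>j\<in>I - {j0}. b j * y j) - b j0 / a j0 * (\<Sum>j\<in>I - {j0}. a j * y j)"
      by (simp add: algebra_simps sum_subtractf sum_distrib_left)
    ultimately show "g ?y = (\<Sum>j\<in>I - {j0}. (b j - b j0 * a j / a j0) * y j) + (c + b j0 * C / a j0)"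
      unfolding g using assms(4) by (simp add: field_simps)
  qed
qed

lemma mono_eq_on_segment:
  fixes h :: "real \<Rightarrow> nat"
  assumes "mono h" "h p = h q" "0 \<le> t" "t \<le> 1"
  shows "h (p + t * (q - p)) = h p"
proof (cases "p \<le> q")
  case True
  have "t * (q - p) \<le> 1 * (q - p)" using True assms by (intro mult_right_mono) auto
  then have "p \<le> p + t * (q - p)" "p + t * (q - p) \<le> q" using True assms by simp_all
  then show ?thesis using assms by (metis antisym monoD)
next
  case False
  have "t * (p - q) \<le> 1 * (p - q)" using False assms by (intro mult_right_mono) auto
  then have "q \<le> p + t * (q - p)" by (simp add: algebra_simps)
  moreover have "p + t * (q - p) \<le> p" using False assms by (simp add: mult_nonneg_nonpos)
  ultimately show ?thesis using assms by (metis antisym monoD)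
qed

text \<open>Intermediate value argument on the segment from \<open>y1\<close> to \<open>y2\<close>, which stays in the cell because
  cells of monotone functions of affine forms are convex.\<close>

lemma level_crossing_in_cell:
  fixes f :: "nat \<Rightarrow> (nat \<Rightarrow> real) \<Rightarrow> real" and h :: "nat \<Rightarrow> real \<Rightarrow> nat"
  assumes aff: "\<And>i. i \<le> n \<Longrightarrow> affine_in I (f i)" and mono: "\<And>i. i \<le> n \<Longrightarrow> mono (h i)"
    and cell: "level_pattern h f n y1 = level_pattern h f n y2"
    and k: "h n (f n y1) < k" "k \<le> h n (f n y2)"
  shows "\<exists>y. level_pattern h f n y = level_pattern h f n y1 \<and> f n y = Inf {v. k \<le> h n v}"
proof -
  define S where "S = {v. k \<le> h n v}"
  have lb: "f n y1 < v" if "v \<in> S" for v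
  proof (rule ccontr)
    assume "\<not> f n y1 < v"
    then have "h n v \<le> h n (f n y1)" using mono[of n] by (simp add: monoD)
    then show False using that k unfolding S_def by simp
  qed
  have in2: "f n y2 \<in> S" using k unfolding S_def by simp
  have lt: "f n y1 < f n y2" using lb[OF in2] .
  have c1: "f n y1 \<le> Inf S" using in2 lb by (intro cInf_greatest) (auto simp: less_imp_le)
  have "bdd_below S" unfolding bdd_below_def using lb less_imp_le by blast
  then have c2: "Inf S \<le> f n y2" using in2 by (rule cInf_lower[rotated])
  define t where "t = (Inf S - f n y1) / (f n y2 - f n y1)"
  have t: "0 \<le> t" "t \<le> 1" using lt c1 c2 unfolding t_def by (auto simp: field_simps)
  define y where "y = (\<lambda>j. y1 j + t * (y2 j - y1 j))"
  have fy: "f i y = f i y1 + t * (f i y2 - f i y1)" if "i \<le> n" for i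
    unfolding y_def by (rule affine_in_segment[OF aff[OF that]])
  have "h i (f i y) = h i (f i y1)" if "i < n" for i
    using cell that fy[of i] mono_eq_on_segment[OF mono _ t, of i] by (simp add: level_pattern_eq_iff)
  moreover have "f n y = Inf S" using fy[of n] lt unfolding t_def by simp
  ultimately show ?thesis unfolding S_def by (auto simp: level_pattern_eq_iff)
qed

lemma card_cell_levels_le:
  fixes f :: "nat \<Rightarrow> (nat \<Rightarrow> real) \<Rightarrow> real" and h :: "nat \<Rightarrow> real \<Rightarrow> nat"
  assumes aff: "\<And>i. i \<le> n \<Longrightarrow> affine_in I (f i)" and mono: "\<And>i. i \<le> n \<Longrightarrow> mono (h i)"
    and bound: "\<And>v. h n v \<le> K"
  shows "card {h n (f n y) |y. y \<in> UNIV \<and> level_pattern h f n y = \<tau>}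
    \<le> 1 + card {k \<in> {1..K}. \<tau> \<in> level_pattern h f n ` {y. f n y = Inf {v. k \<le> h n v}}}"
    (is "card ?V \<le> 1 + card ?crossed")
proof (cases "?V = {}")
  case False
  have fin: "finite ?V" by (rule finite_subset[of _ "{0..K}"]) (auto intro: bound)
  obtain y1 where y1: "level_pattern h f n y1 = \<tau>" "h n (f n y1) = Min ?V"
    using Min_in[OF fin False] by auto
  obtain y2 where y2: "level_pattern h f n y2 = \<tau>" "h n (f n y2) = Max ?V"
    using Max_in[OF fin False] by auto
  have "{Min ?V<..Max ?V} \<subseteq> ?crossed"
  proof
    fix k assume k: "k \<in> {Min ?V<..Max ?V}"
    have "Max ?V \<le> K" using y2 bound by metis
    moreover have cell: "level_pattern h f n y1 = level_pattern h f n y2" using y1(1) y2(1) by simp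
    moreover have "h n (f n y1) < k" "k \<le> h n (f n y2)" using k y1(2) y2(2) by auto
    then obtain y where "level_pattern h f n y = \<tau>" "f n y = Inf {v. k \<le> h n v}"
      using level_crossing_in_cell[OF aff mono cell] y1(1) by metis
    ultimately show "k \<in> ?crossed" using k by auto
  qed
  then have "card {Min ?V<..Max ?V} \<le> card ?crossed" by (intro card_mono) auto
  moreover have "card ?V \<le> card {Min ?V..Max ?V}"
  proof (rule card_mono)
    show "?V \<subseteq> {Min ?V..Max ?V}"
    proof
      fix v assume "v \<in> ?V"
      then show "v \<in> {Min ?V..Max ?V}"
        using Min_le[OF fin] Max_ge[OF fin] by (simp only: atLeastAtMost_iff)
    qed
  qed simp
  ultimately show ?thesis by simp
qed simp

lemma level_patterns_on_hyperplane:
  assumes "finite I" "j0 \<in> I" "a j0 \<noteq> 0" "\<And>y. f n y = (\<Sum>j\<in>I. a j * y j) + c"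
  shows "level_pattern h f n ` {y. f n y = C}
    \<subseteq> range (level_pattern h (\<lambda>i y. f i (y(j0 := (C - c - (\<Sum>j\<in>I - {j0}. a j * y j)) / a j0))) n)"
proof (rule image_subsetI)
  fix y assume y: "y \<in> {y. f n y = C}"
  have "(\<Sum>j\<in>I. a j * y j) = a j0 * y j0 + (\<Sum>j\<in>I - {j0}. a j * y j)"
    using assms(1,2) by (simp add: sum.remove)
  then have "y j0 = (C - c - (\<Sum>j\<in>I - {j0}. a j * y j)) / a j0"
    using y assms(3) assms(4)[of y] by (simp add: field_simps)
  then have "y(j0 := (C - c - (\<Sum>j\<in>I - {j0}. a j * y j)) / a j0) = y" by (rule fun_upd_idem)
  then have "level_pattern h f n y
      = level_pattern h (\<lambda>i y. f i (y(j0 := (C - c - (\<Sum>j\<in>I - {j0}. a j * y j)) / a j0))) n y"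
    by (simp add: level_pattern_def)
  then show "level_pattern h f n y
      \<in> range (level_pattern h (\<lambda>i y. f i (y(j0 := (C - c - (\<Sum>j\<in>I - {j0}. a j * y j)) / a j0))) n)"
    by blast
qed

lemma sum_card_cell_levels_le:
  fixes f :: "nat \<Rightarrow> (nat \<Rightarrow> real) \<Rightarrow> real" and h :: "nat \<Rightarrow> real \<Rightarrow> nat"
  assumes "finite (range (level_pattern h f n))"
    and "\<And>i. i \<le> n \<Longrightarrow> affine_in I (f i)" "\<And>i. i \<le> n \<Longrightarrow> mono (h i)" "\<And>v. h n v \<le> K"
    and hyperplane: "\<And>C. card (level_pattern h f n ` {y. f n y = C}) \<le> B"
  shows "(\<Sum>\<tau>\<in>range (level_pattern h f n). card {h n (f n y) |y. y \<in> UNIV \<and> level_pattern h f n y = \<tau>})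
    \<le> card (range (level_pattern h f n)) + K * B"
proof -
  let ?pat = "level_pattern h f n"
  let ?H = "\<lambda>k. {y. f n y = Inf {v. k \<le> h n v}}"
  have "(\<Sum>\<tau>\<in>range ?pat. card {h n (f n y) |y. y \<in> UNIV \<and> ?pat y = \<tau>})
      \<le> (\<Sum>\<tau>\<in>range ?pat. 1 + card {k \<in> {1..K}. \<tau> \<in> ?pat ` ?H k})"
    using assms(2-4) by (intro sum_mono card_cell_levels_le) auto
  also have "\<dots> = card (range ?pat) + (\<Sum>\<tau>\<in>range ?pat. card {k \<in> {1..K}. \<tau> \<in> ?pat ` ?H k})"
    by (simp only: sum.distrib card_eq_sum)
  also have "(\<Sum>\<tau>\<in>range ?pat. card {k \<in> {1..K}. \<tau> \<in> ?pat ` ?H k})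
      = (\<Sum>k\<in>{1..K}. card {\<tau> \<in> range ?pat. \<tau> \<in> ?pat ` ?H k})"
    using assms(1) by (rule sum_card_filter_swap) simp
  also have "\<dots> = (\<Sum>k\<in>{1..K}. card (?pat ` ?H k))"
    by (intro sum.cong refl arg_cong[where f = card]) auto
  also have "\<dots> \<le> K * B"
    using sum_mono[of "{1..K}" "\<lambda>k. card (?pat ` ?H k)" "\<lambda>_. B"] hyperplane by simp
  finally show ?thesis by simp
qed

lemma card_level_patterns_le:
  fixes f :: "nat \<Rightarrow> (nat \<Rightarrow> real) \<Rightarrow> real" and h :: "nat \<Rightarrow> real \<Rightarrow> nat"
  assumes "finite I" "\<And>i. i < n \<Longrightarrow> affine_in I (f i)" "\<And>i. i < n \<Longrightarrow> mono (h i)"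
    "\<And>i v. i < n \<Longrightarrow> h i v \<le> K"
  shows "card (range (level_pattern h f n)) \<le> arrangement_bound K (card I) n"
  using assms
proof (induction n arbitrary: I f)
  case 0
  then show ?case by (simp add: level_pattern_def image_constant_conv)
next
  case (Suc n)
  let ?pat = "level_pattern h f n"
  define V where "V \<tau> = {h n (f n y) |y. y \<in> UNIV \<and> ?pat y = \<tau>}" for \<tau>
  have fin: "finite (range ?pat)" using Suc.prems(4) by (intro finite_level_patterns[where K = K]) auto
  have IH: "card (range ?pat) \<le> arrangement_bound K (card I) n"
    using Suc by (intro Suc.IH) auto
  have "card (range (level_pattern h f (Suc n))) = (\<Sum>\<tau>\<in>range ?pat. card (V \<tau>))"
    unfolding level_pattern_Suc V_def
    by (rule card_image_snoc[OF fin]) (rule finite_subset[of _ "{0..K}"], use Suc.prems(4) in auto)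
  also have "\<dots> \<le> arrangement_bound K (card I) (Suc n)"
  proof (cases "\<exists>c. \<forall>y. f n y = c")
    case True
    then obtain c where "\<forall>y. f n y = c" by blast
    then have "card (V \<tau>) \<le> card {h n c}" for \<tau> unfolding V_def by (intro card_mono) auto
    then have "(\<Sum>\<tau>\<in>range ?pat. card (V \<tau>)) \<le> card (range ?pat)"
      using sum_mono[of "range ?pat" "\<lambda>\<tau>. card (V \<tau>)" "\<lambda>_. 1"] by simp
    then show ?thesis using IH arrangement_bound_le_Suc[of K "card I" n] by linarith
  next
    case False
    obtain a c where fn: "\<And>y. f n y = (\<Sum>j\<in>I. a j * y j) + c"
      using Suc.prems(2)[of n] unfolding affine_in_def by auto
    have "\<exists>j0\<in>I. a j0 \<noteq> 0"
    proof (rule ccontr)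
      assume "\<not> (\<exists>j0\<in>I. a j0 \<noteq> 0)"
      then have "f n y = c" for y using fn by simp
      then show False using False by blast
    qed
    then obtain j0 where j0: "j0 \<in> I" "a j0 \<noteq> 0" by blast
    define d where "d = card (I - {j0})"
    have card_I: "card I = Suc d" unfolding d_def using card_Suc_Diff1[OF Suc.prems(1) j0(1)] by simp
    have "card (?pat ` {y. f n y = C}) \<le> arrangement_bound K d n" for C
    proof -
      let ?g = "\<lambda>i y. f i (y(j0 := (C - c - (\<Sum>j\<in>I - {j0}. a j * y j)) / a j0))"
      have "?pat ` {y. f n y = C} \<subseteq> range (level_pattern h ?g n)"
        using Suc.prems(1) j0 fn by (rule level_patterns_on_hyperplane)
      moreover have "finite (range (level_pattern h ?g n))"
        using Suc.prems(4) by (intro finite_level_patterns[where K = K]) auto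
      moreover have "card (range (level_pattern h ?g n)) \<le> arrangement_bound K d n"
        unfolding d_def
      proof (rule Suc.IH)
        show "finite (I - {j0})" using Suc.prems(1) by simp
        show "affine_in (I - {j0}) (?g i)" if "i < n" for i
          using Suc.prems(1,2) j0 that by (intro affine_in_substitute) auto
      qed (use Suc.prems in auto)
      ultimately show ?thesis by (meson card_mono order_trans)
    qed
    then have "(\<Sum>\<tau>\<in>range ?pat. card (V \<tau>)) \<le> card (range ?pat) + K * arrangement_bound K d n"
      unfolding V_def using fin Suc.prems(2-4) by (intro sum_card_cell_levels_le) (auto simp: less_Suc_eq_le)
    then show ?thesis using IH card_I by (simp add: arrangement_bound_Suc_Suc)
  qed
  finally show ?case .
qed

section \<open>Activation and constant regions\<close>

definition layer1_input :: "snn_params \<Rightarrow> nat \<Rightarrow> real list \<Rightarrow> nat \<Rightarrow> real" where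
  "layer1_input P n_in x i = (\<Sum>j<n_in. snn_W P 1 i j * x ! j) + snn_b P 1 i"

abbreviation layer1_fires :: "snn_params \<Rightarrow> nat \<Rightarrow> real list \<Rightarrow> nat \<Rightarrow> nat \<Rightarrow> bool" where
  "layer1_fires P n_in x i t \<equiv>
     lif_fires (snn_beta P 1) (snn_thr P 1) (snn_u0 P 1 i) (layer1_input P n_in x i) t"

lemma snn_layer1_potential:
  "snd (snn_st P n_in ns x (Suc 0) t) i =
     lif_potential (snn_beta P 1) (snn_thr P 1) (snn_u0 P 1 i) (layer1_input P n_in x i) t"
  by (induction t) (simp_all add: Let_def heaviside_def width_def layer1_input_def)

lemma snn_layer1_spike:
  "fst (snn_st P n_in ns x (Suc 0) (Suc t)) i = (if layer1_fires P n_in x i t then 1 else 0)"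
  using snn_layer1_potential[of P n_in ns x t i]
  by (simp add: Let_def heaviside_def width_def layer1_input_def lif_fires_def)

lemma snn_layer1_spike_01: "fst (snn_st P n_in ns x (Suc 0) t) i \<in> {0, 1}"
proof (cases t)
  case (Suc t')
  then show ?thesis by (simp only: snn_layer1_spike) simp
qed simp

lemma snn_pattern_eq:
  "snn_pattern P n_in ns T x =
     (\<lambda>t i. if 1 \<le> t \<and> t \<le> T \<and> i < hd ns \<and> layer1_fires P n_in x i (t - 1) then 1 else 0)"
proof (intro ext)
  fix t i
  show "snn_pattern P n_in ns T x t i =
      (if 1 \<le> t \<and> t \<le> T \<and> i < hd ns \<and> layer1_fires P n_in x i (t - 1) then 1 else 0)"
  proof (cases t)
    case (Suc t')
    then show ?thesis using snn_layer1_spike[of P n_in ns x t' i] by (simp add: snn_pattern_def)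
  qed (simp add: snn_pattern_def)
qed

lemma snn_pattern_eq_iff:
  "snn_pattern P n_in ns T x = snn_pattern P n_in ns T x' \<longleftrightarrow>
     (\<forall>i<hd ns. \<forall>k<T. layer1_fires P n_in x i k \<longleftrightarrow> layer1_fires P n_in x' i k)"
proof
  assume "snn_pattern P n_in ns T x = snn_pattern P n_in ns T x'"
  then have "snn_pattern P n_in ns T x (Suc k) i = snn_pattern P n_in ns T x' (Suc k) i" for k i
    by simp
  then show "\<forall>i<hd ns. \<forall>k<T. layer1_fires P n_in x i k \<longleftrightarrow> layer1_fires P n_in x' i k"
    unfolding snn_pattern_eq by (metis Suc_leI diff_Suc_1 le_add1 plus_1_eq_Suc one_neq_zero)
next
  assume "\<forall>i<hd ns. \<forall>k<T. layer1_fires P n_in x i k \<longleftrightarrow> layer1_fires P n_in x' i k"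
  then show "snn_pattern P n_in ns T x = snn_pattern P n_in ns T x'"
    unfolding snn_pattern_eq by (intro ext) auto
qed

lemma finite_snn_patterns: "finite (snn_pattern P n_in ns T ` X)"
proof (rule finite_subset)
  show "snn_pattern P n_in ns T ` X
      \<subseteq> (\<lambda>S t i. if (t, i) \<in> S then 1 else 0) ` Pow ({1..T} \<times> {..<hd ns})"
  proof
    fix p assume "p \<in> snn_pattern P n_in ns T ` X"
    then obtain x where p: "p = snn_pattern P n_in ns T x" by auto
    define S where "S = {(t, i). t \<in> {1..T} \<and> i < hd ns \<and> p t i = 1}"
    have "p = (\<lambda>t i. if (t, i) \<in> S then 1 else 0)"
      unfolding S_def p snn_pattern_eq by (intro ext) auto
    moreover have "S \<in> Pow ({1..T} \<times> {..<hd ns})" unfolding S_def by auto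
    ultimately show "p \<in> (\<lambda>S t i. if (t, i) \<in> S then 1 else 0) ` Pow ({1..T} \<times> {..<hd ns})"
      by blast
  qed
qed auto

lemma card_nonempty_fibres: "card {S. \<exists>A. S = {x \<in> X. g x = A} \<and> S \<noteq> {}} = card (g ` X)"
proof -
  have "{S. \<exists>A. S = {x \<in> X. g x = A} \<and> S \<noteq> {}} = (\<lambda>A. {x \<in> X. g x = A}) ` (g ` X)"
    by auto
  moreover have "inj_on (\<lambda>A. {x \<in> X. g x = A}) (g ` X)"
    by (rule inj_onI) blast
  ultimately show ?thesis by (simp add: card_image)
qed

lemma card_activation_regions:
  "card (activation_regions P n_in ns T) = card (snn_pattern P n_in ns T ` snn_inputs n_in)"
  unfolding activation_regions_def by (rule card_nonempty_fibres)

lemma card_constant_regions: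
  "card (constant_regions P n_in ns n_out T) = card (snn_output P n_in ns n_out T ` snn_inputs n_in)"
  unfolding constant_regions_def by (rule card_nonempty_fibres)

lemma image_factors_through:
  assumes "\<And>x y. x \<in> A \<Longrightarrow> y \<in> A \<Longrightarrow> F x = F y \<Longrightarrow> G x = G y"
  obtains H where "G ` A = H ` F ` A"
proof
  have "G x = G (SOME x'. x' \<in> A \<and> F x' = F x)" if "x \<in> A" for x
  proof (rule assms[OF that])
    have "(SOME x'. x' \<in> A \<and> F x' = F x) \<in> A \<and> F (SOME x'. x' \<in> A \<and> F x' = F x) = F x"
      by (rule someI[where P = "\<lambda>x'. x' \<in> A \<and> F x' = F x" and x = x]) (simp add: that)
    then show "(SOME x'. x' \<in> A \<and> F x' = F x) \<in> A" "F x = F (SOME x'. x' \<in> A \<and> F x' = F x)"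
      by simp_all
  qed
  then show "G ` A = (\<lambda>v. G (SOME x. x \<in> A \<and> F x = v)) ` F ` A"
    unfolding image_image by (rule image_cong[OF refl])
qed

lemma card_image_le_if_factors:
  assumes "finite (F ` A)" "\<And>x y. x \<in> A \<Longrightarrow> y \<in> A \<Longrightarrow> F x = F y \<Longrightarrow> G x = G y"
  shows "card (G ` A) \<le> card (F ` A)"
  using assms by (metis image_factors_through card_image_le)

lemma finite_image_if_factors:
  assumes "finite (F ` A)" "\<And>x y. x \<in> A \<Longrightarrow> y \<in> A \<Longrightarrow> F x = F y \<Longrightarrow> G x = G y"
  shows "finite (G ` A)"
  using assms by (metis image_factors_through finite_imageI)

lemma card_activation_regions_le:
  assumes "ns \<noteq> []" "snn_valid ns P"
  shows "card (activation_regions P n_in ns T) \<le> arrangement_bound (T * (T + 1) div 2) n_in (hd ns)"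
proof -
  let ?\<beta> = "snn_beta P 1" and ?\<theta> = "snn_thr P 1"
  have params: "0 \<le> ?\<beta>" "?\<beta> \<le> 1" "0 \<le> ?\<theta>"
    using assms unfolding snn_valid_def by (auto simp: less_imp_le Suc_le_eq)
  define h where "h i = lif_code_rank ?\<beta> ?\<theta> (snn_u0 P 1 i) T" for i
  define f where "f i y = (\<Sum>j\<in>{..<n_in}. snn_W P 1 i j * y j) + snn_b P 1 i"
    for i and y :: "nat \<Rightarrow> real"
  let ?pat = "\<lambda>x. level_pattern h f (hd ns) (\<lambda>j. x ! j)"
  have h_le: "h i v \<le> T * (T + 1) div 2" for i v
    unfolding h_def using params by (rule lif_code_rank_le)
  have fin: "finite (range (level_pattern h f (hd ns)))"
    using h_le by (intro finite_level_patterns[where K = "T * (T + 1) div 2"])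
  have "card (snn_pattern P n_in ns T ` snn_inputs n_in) \<le> card (?pat ` snn_inputs n_in)"
  proof (rule card_image_le_if_factors)
    show "finite (?pat ` snn_inputs n_in)" using fin by (rule finite_subset[rotated]) auto
    fix x y assume "?pat x = ?pat y"
    then have rank_eq: "h i (layer1_input P n_in x i) = h i (layer1_input P n_in y i)"
      if "i < hd ns" for i
      using that by (simp add: level_pattern_eq_iff f_def layer1_input_def)
    show "snn_pattern P n_in ns T x = snn_pattern P n_in ns T y"
      unfolding snn_pattern_eq_iff
    proof (intro allI impI)
      fix i k assume "i < hd ns" "k < T"
      then have "lif_spike_code ?\<beta> ?\<theta> (snn_u0 P 1 i) (layer1_input P n_in x i) T
          = lif_spike_code ?\<beta> ?\<theta> (snn_u0 P 1 i) (layer1_input P n_in y i) T"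
        using rank_eq unfolding h_def by (intro lif_code_rank_eq_imp_code_eq) simp
      then show "layer1_fires P n_in x i k \<longleftrightarrow> layer1_fires P n_in y i k"
        using \<open>k < T\<close> by (rule lif_spike_code_eq_imp_fires_eq)
    qed
  qed
  also have "\<dots> \<le> card (range (level_pattern h f (hd ns)))"
    using fin by (intro card_mono) auto
  also have "\<dots> \<le> arrangement_bound (T * (T + 1) div 2) (card {..<n_in}) (hd ns)"
  proof (rule card_level_patterns_le)
    show "affine_in {..<n_in} (f i)" for i unfolding affine_in_def f_def by blast
    show "mono (h i)" for i unfolding h_def using params by (rule mono_lif_code_rank)
    show "h i v \<le> T * (T + 1) div 2" for i v by (rule h_le)
  qed simp
  finally show ?thesis by (simp add: card_activation_regions)
qed

lemma snn_st_Suc_Suc_cong: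
  assumes "snd (snn_st P n_in ns x (Suc l) t) = snd (snn_st P n_in ns x' (Suc l) t)"
    and "\<forall>j<width n_in ns l. fst (snn_st P n_in ns x l (Suc t)) j = fst (snn_st P n_in ns x' l (Suc t)) j"
  shows "snn_st P n_in ns x (Suc l) (Suc t) = snn_st P n_in ns x' (Suc l) (Suc t)"
proof -
  have "(\<Sum>j<width n_in ns l. snn_W P (Suc l) i j * fst (snn_st P n_in ns x l (Suc t)) j)
      = (\<Sum>j<width n_in ns l. snn_W P (Suc l) i j * fst (snn_st P n_in ns x' l (Suc t)) j)" for i
    using assms(2) by (intro sum.cong) auto
  then show ?thesis using assms(1) by (simp add: Let_def)
qed

lemma snn_layer1_spike_eq_if_pattern_eq:
  assumes "snn_pattern P n_in ns T x = snn_pattern P n_in ns T x'" "t \<le> T" "j < hd ns"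
  shows "fst (snn_st P n_in ns x (Suc 0) t) j = fst (snn_st P n_in ns x' (Suc 0) t) j"
proof (cases t)
  case (Suc t')
  then show ?thesis
    using assms by (simp only: snn_layer1_spike) (auto simp: snn_pattern_eq_iff)
qed simp

lemma snn_st_eq_if_pattern_eq:
  assumes pat: "snn_pattern P n_in ns T x = snn_pattern P n_in ns T x'" and "ns \<noteq> []"
  shows "t \<le> T \<Longrightarrow> snn_st P n_in ns x (Suc (Suc l)) t = snn_st P n_in ns x' (Suc (Suc l)) t"
proof (induction t arbitrary: l)
  case 0
  show ?case by simp
next
  case (Suc t)
  note earlier = Suc.IH[OF Suc_leD[OF Suc.prems]]
  show ?case
  proof (induction l)
    case 0
    have "width n_in ns (Suc 0) = hd ns" using assms(2) by (simp add: width_def hd_conv_nth)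
    then show ?case
      using earlier snn_layer1_spike_eq_if_pattern_eq[OF pat Suc.prems]
      by (intro snn_st_Suc_Suc_cong) auto
  next
    case (Suc l)
    then show ?case using earlier by (intro snn_st_Suc_Suc_cong) auto
  qed
qed

lemma snn_output_eq_if_pattern_eq:
  assumes pat: "snn_pattern P n_in ns T x = snn_pattern P n_in ns T x'" and ne: "ns \<noteq> []"
  shows "snn_output P n_in ns n_out T x = snn_output P n_in ns n_out T x'"
proof -
  have last_layer: "fst (snn_st P n_in ns x (length ns) t) j = fst (snn_st P n_in ns x' (length ns) t) j"
    if "t \<le> T" "j < last ns" for t j
  proof (cases ns rule: rev_cases)
    case (snoc ms m)
    show ?thesis
    proof (cases ms)
      case Nil
      then show ?thesis
        using snn_layer1_spike_eq_if_pattern_eq[OF pat] that snoc by simp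
    next
      case (Cons m' ms')
      then show ?thesis
        using snn_st_eq_if_pattern_eq[OF pat ne, of t "length ms'"] that snoc by simp
    qed
  qed (use ne in simp)
  show ?thesis
    unfolding snn_output_def using last_layer by (intro ext if_cong sum.cong refl) auto
qed

lemma card_constant_regions_le_activation_regions:
  assumes "ns \<noteq> []"
  shows "card (constant_regions P n_in ns n_out T) \<le> card (activation_regions P n_in ns T)"
  unfolding card_constant_regions card_activation_regions
  using finite_snn_patterns snn_output_eq_if_pattern_eq[OF _ assms]
  by (rule card_image_le_if_factors)

section \<open>Relaying the first layer to the output\<close>

lemma digit_sum_less:
  fixes d :: "nat \<Rightarrow> nat"
  assumes "\<forall>t<n. d t < B"
  shows "(\<Sum>t<n. B ^ t * d t) < B ^ n"
  using assms
proof (induction n)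
  case (Suc n)
  have "B ^ n * (d n + 1) \<le> B ^ n * B" using Suc.prems by (intro mult_le_mono2) auto
  then show ?case using Suc by (simp add: algebra_simps)
qed simp

lemma digit_sum_inj:
  fixes d d' :: "nat \<Rightarrow> nat"
  assumes "\<forall>t<n. d t < B" "\<forall>t<n. d' t < B" "(\<Sum>t<n. B ^ t * d t) = (\<Sum>t<n. B ^ t * d' t)"
  shows "\<forall>t<n. d t = d' t"
  using assms
proof (induction n)
  case (Suc n)
  define S S' where "S = (\<Sum>t<n. B ^ t * d t)" and "S' = (\<Sum>t<n. B ^ t * d' t)"
  have less: "S < B ^ n" "S' < B ^ n"
    unfolding S_def S'_def using Suc.prems by (auto intro: digit_sum_less)
  then have Bn: "B ^ n \<noteq> 0" by linarith
  have "(S + B ^ n * d n) div B ^ n = d n"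
    using div_mult_self2[OF Bn, of S "d n"] div_less[OF less(1)] by simp
  moreover have "(S' + B ^ n * d' n) div B ^ n = d' n"
    using div_mult_self2[OF Bn, of S' "d' n"] div_less[OF less(2)] by simp
  moreover have eq: "S + B ^ n * d n = S' + B ^ n * d' n"
    using Suc.prems(3) unfolding S_def S'_def by simp
  ultimately have dn: "d n = d' n" by metis
  then have "S = S'" using eq by simp
  then have "\<forall>t<n. d t = d' t"
    unfolding S_def S'_def by (intro Suc.IH) (use Suc.prems in auto)
  then show ?case using dn by (auto simp: less_Suc_eq)
qed simp

text \<open>Keeps the first layer of \<open>P\<close>, passes the spikes of its first \<open>n1\<close> neurons unchanged through
  identity layers (leak 0, threshold 1), and reads the spikes at all times and neurons off as
  the binary digits of the first output.\<close>

definition relay_params :: "snn_params \<Rightarrow> nat \<Rightarrow> snn_params" where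
  "relay_params P n1 = P\<lparr>
     snn_W := (\<lambda>l i j. if l = 1 then snn_W P 1 i j else if i = j \<and> i < n1 then 1 else 0),
     snn_b := (\<lambda>l i. if l = 1 then snn_b P 1 i else 0),
     snn_u0 := (\<lambda>l i. if l = 1 then snn_u0 P 1 i else 0),
     snn_beta := (\<lambda>l. if l = 1 then snn_beta P 1 else 0),
     snn_thr := (\<lambda>l. if l = 1 then snn_thr P 1 else 1),
     snn_a := (\<lambda>t. (2 ^ n1) ^ (t - 1)),
     snn_V := (\<lambda>k j. if k = 0 \<and> j < n1 then 2 ^ j else 0),
     snn_c := (\<lambda>_. 0) \<rparr>"

lemma relay_params_decoder:
  "snn_a (relay_params P n1) t = (2 ^ n1) ^ (t - 1)"
  "snn_V (relay_params P n1) k j = (if k = 0 \<and> j < n1 then 2 ^ j else 0)"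
  "snn_c (relay_params P n1) k = 0"
  by (simp_all add: relay_params_def)

lemma snn_valid_relay_params: "snn_valid ns P \<Longrightarrow> snn_valid ns (relay_params P n1)"
  unfolding snn_valid_def by (auto simp: relay_params_def)

lemma snn_st_relay_params_layer1:
  "snn_st (relay_params P n1) n_in ns x (Suc 0) t = snn_st P n_in ns x (Suc 0) t"
  by (induction t) (simp_all add: relay_params_def Let_def)

lemma snn_st_relay_params:
  assumes "Suc l \<le> length ns" "\<forall>n\<in>set ns. n1 \<le> n" "i < n1"
  shows "fst (snn_st (relay_params P n1) n_in ns x (Suc l) t) i = fst (snn_st P n_in ns x (Suc 0) t) i"
  using assms(1)
proof (induction l arbitrary: t)
  case 0
  then show ?case by (simp add: snn_st_relay_params_layer1)
next
  case (Suc l)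
  show ?case
  proof (cases t)
    case (Suc t')
    let ?Q = "relay_params P n1"
    define s where "s = fst (snn_st ?Q n_in ns x (Suc l) (Suc t'))"
    have "ns ! l \<in> set ns" using Suc.prems by simp
    then have "i < width n_in ns (Suc l)" using assms(2,3) by (auto simp: width_def)
    then have "(\<Sum>j<width n_in ns (Suc l). snn_W ?Q (Suc (Suc l)) i j * s j)
        = (\<Sum>j<width n_in ns (Suc l). if j = i then s j else 0)"
      using assms(3) by (intro sum.cong) (auto simp: relay_params_def)
    also have "\<dots> = s i" using \<open>i < width n_in ns (Suc l)\<close> by simp
    finally have "fst (snn_st ?Q n_in ns x (Suc (Suc l)) t) i = heaviside (s i - 1)"
      unfolding Suc snn_st.simps(3)[of ?Q n_in ns x "Suc l" t'] Let_def s_def[symmetric] fst_conv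
      by (simp only:) (simp add: relay_params_def)
    moreover have "s i = fst (snn_st P n_in ns x (Suc 0) t) i"
      unfolding s_def Suc using Suc.IH[of "Suc t'"] Suc.prems by simp
    ultimately show ?thesis
      using snn_layer1_spike_01[of P n_in ns x t i] by (auto simp: heaviside_def)
  qed simp
qed

lemma snn_output_relay_params:
  assumes "ns \<noteq> []" "\<forall>n\<in>set ns. hd ns \<le> n" "1 \<le> n_out"
  shows "snn_output (relay_params P (hd ns)) n_in ns n_out T x 0 =
    real (\<Sum>t<T. (2 ^ hd ns) ^ t * (\<Sum>j<hd ns. 2 ^ j * of_bool (layer1_fires P n_in x j t)))"
proof -
  let ?Q = "relay_params P (hd ns)"
  obtain l where l: "length ns = Suc l" using assms(1) by (cases ns) auto
  have last_layer: "fst (snn_st ?Q n_in ns x (length ns) (Suc t)) j = of_bool (layer1_fires P n_in x j t)"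
    if "j < hd ns" for t j
  proof -
    have "fst (snn_st ?Q n_in ns x (length ns) (Suc t)) j = fst (snn_st P n_in ns x (Suc 0) (Suc t)) j"
      unfolding l using l assms(2) that by (intro snn_st_relay_params) auto
    then show ?thesis by (simp only: snn_layer1_spike) simp
  qed
  have digits: "(\<Sum>j<last ns. snn_V ?Q 0 j * fst (snn_st ?Q n_in ns x (length ns) (Suc t)) j)
      = (\<Sum>j<hd ns. 2 ^ j * of_bool (layer1_fires P n_in x j t))" for t
  proof -
    have "hd ns \<le> last ns" using assms(1,2) by simp
    then have "{j \<in> {..<last ns}. j < hd ns} = {..<hd ns}" by auto
    moreover have "(\<Sum>j<last ns. snn_V ?Q 0 j * fst (snn_st ?Q n_in ns x (length ns) (Suc t)) j)
        = (\<Sum>j<last ns. if j < hd ns then 2 ^ j * of_bool (layer1_fires P n_in x j t) else 0)"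
      by (rule sum.cong) (simp_all add: relay_params_decoder last_layer)
    ultimately show ?thesis by (simp add: sum.inter_filter[symmetric])
  qed
  have "snn_output ?Q n_in ns n_out T x 0 = (\<Sum>t = 1..T. snn_a ?Q t *
      ((\<Sum>j<last ns. snn_V ?Q 0 j * fst (snn_st ?Q n_in ns x (length ns) t) j) + snn_c ?Q 0))"
    unfolding snn_output_def using assms(3) by simp
  also have "\<dots> = (\<Sum>t<T. snn_a ?Q (Suc t) *
      ((\<Sum>j<last ns. snn_V ?Q 0 j * fst (snn_st ?Q n_in ns x (length ns) (Suc t)) j) + snn_c ?Q 0))"
    by (rule sum_bounds_lt_plus1[symmetric])
  also have "\<dots> = (\<Sum>t<T. (2 ^ hd ns) ^ t * (\<Sum>j<hd ns. 2 ^ j * of_bool (layer1_fires P n_in x j t)))"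
    by (simp only: digits) (simp add: relay_params_decoder)
  finally show ?thesis by simp
qed

lemma snn_output_relay_params_inj:
  assumes "ns \<noteq> []" "\<forall>n\<in>set ns. hd ns \<le> n" "1 \<le> n_out"
    and "snn_output (relay_params P (hd ns)) n_in ns n_out T x = snn_output (relay_params P (hd ns)) n_in ns n_out T x'"
  shows "snn_pattern P n_in ns T x = snn_pattern P n_in ns T x'"
proof -
  define D :: "real list \<Rightarrow> nat \<Rightarrow> nat"
    where "D x t = (\<Sum>j<hd ns. 2 ^ j * of_bool (layer1_fires P n_in x j t))" for x t
  have D_less: "D x t < 2 ^ hd ns" for x t
    unfolding D_def by (rule digit_sum_less) simp
  have "(\<Sum>t<T. (2 ^ hd ns) ^ t * D x t) = (\<Sum>t<T. (2 ^ hd ns) ^ t * D x' t)"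
    using fun_cong[OF assms(4), of 0] unfolding snn_output_relay_params[OF assms(1-3)] D_def
    by (simp only: of_nat_eq_iff)
  then have "D x t = D x' t" if "t < T" for t
    using digit_sum_inj[of T "D x" "2 ^ hd ns" "D x'"] D_less that by blast
  then have "of_bool (layer1_fires P n_in x j t) = (of_bool (layer1_fires P n_in x' j t) :: nat)"
    if "t < T" "j < hd ns" for t j
    using digit_sum_inj[of "hd ns" "\<lambda>j. of_bool (layer1_fires P n_in x j t)" 2
        "\<lambda>j. of_bool (layer1_fires P n_in x' j t)"] that
    unfolding D_def by auto
  then show ?thesis unfolding snn_pattern_eq_iff by (simp add: of_bool_eq_iff)
qed

lemma card_activation_regions_le_relay_params:
  assumes "ns \<noteq> []" "\<forall>n\<in>set ns. hd ns \<le> n" "1 \<le> n_out"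
  shows "card (activation_regions P n_in ns T)
    \<le> card (constant_regions (relay_params P (hd ns)) n_in ns n_out T)"
proof -
  let ?Q = "relay_params P (hd ns)"
  have "finite (snn_output ?Q n_in ns n_out T ` snn_inputs n_in)"
    using finite_snn_patterns snn_output_eq_if_pattern_eq[OF _ assms(1)]
    by (rule finite_image_if_factors)
  then show ?thesis
    unfolding card_activation_regions card_constant_regions
    using snn_output_relay_params_inj[OF assms] by (rule card_image_le_if_factors)
qed

section \<open>Breakpoints of the unit neuron\<close>

lemma lif_unit_potential:
  "lif_potential 1 1 u0 z t = u0 + real t * z - real (lif_spike_count 1 1 u0 z t)"
  by (induction t) (auto simp: lif_fires_def algebra_simps)

lemma lif_unit_spike_count_neg:
  assumes "z < 0" "u0 < 1"
  shows "lif_spike_count 1 1 u0 z t = 0"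
proof (induction t)
  case (Suc t)
  have "real t * z \<le> 0" using assms by (simp add: mult_nonneg_nonpos)
  then show ?case using Suc assms lif_unit_potential[of u0 z t] by (simp add: lif_fires_def)
qed simp

lemma lif_unit_potential_bounds:
  assumes "0 \<le> z" "z < 1" "0 \<le> u0" "u0 < 1"
  shows "0 \<le> lif_potential 1 1 u0 z t \<and> lif_potential 1 1 u0 z t < 1"
  using assms by (induction t) auto

lemma lif_unit_spike_count_ge_1:
  assumes "1 \<le> z" "0 \<le> u0"
  shows "lif_spike_count 1 1 u0 z t = t \<and> 0 \<le> lif_potential 1 1 u0 z t"
  using assms by (induction t) (auto simp: lif_fires_def)

lemma lif_unit_spike_count:
  assumes "0 \<le> u0" "u0 < 1"
  shows "lif_spike_count 1 1 u0 z t = min t (nat \<lfloor>u0 + real t * z\<rfloor>)"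
proof -
  consider "z < 0" | "0 \<le> z" "z < 1" | "1 \<le> z" by linarith
  then show ?thesis
  proof cases
    case 1
    then have "u0 + real t * z < 1" using assms by (smt (verit) mult_nonneg_nonpos of_nat_0_le_iff)
    then show ?thesis using lif_unit_spike_count_neg[OF 1 assms(2)] by (simp add: floor_less_iff)
  next
    case 2
    let ?n = "lif_spike_count 1 1 u0 z t"
    have "0 \<le> lif_potential 1 1 u0 z t" "lif_potential 1 1 u0 z t < 1"
      using lif_unit_potential_bounds[OF 2 assms] by auto
    then have "real ?n \<le> u0 + real t * z" "u0 + real t * z < real ?n + 1"
      using lif_unit_potential[of u0 z t] by linarith+
    then have "\<lfloor>u0 + real t * z\<rfloor> = int ?n" by (simp add: floor_eq_iff)
    then show ?thesis using lif_spike_count_le[of 1 1 u0 z t] by simp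
  next
    case 3
    have "real t \<le> real t * z" using 3 by (simp add: mult_le_cancel_left1)
    then have "t \<le> nat \<lfloor>u0 + real t * z\<rfloor>" using assms by (simp add: le_nat_floor)
    then show ?thesis using lif_unit_spike_count_ge_1[OF 3 assms(1)] by simp
  qed
qed

lemma card_nat_le_real: "card {j \<in> {1..t}. real j \<le> a} = min t (nat \<lfloor>a\<rfloor>)"
proof -
  have "{j \<in> {1..t}. real j \<le> a} = {1..min t (nat \<lfloor>a\<rfloor>)}"
  proof (intro set_eqI iffI)
    fix j assume "j \<in> {j \<in> {1..t}. real j \<le> a}"
    then have "1 \<le> j" "j \<le> t" "int j \<le> \<lfloor>a\<rfloor>" by (auto simp: le_floor_iff)
    then show "j \<in> {1..min t (nat \<lfloor>a\<rfloor>)}" by auto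
  next
    fix j assume "j \<in> {1..min t (nat \<lfloor>a\<rfloor>)}"
    then have "1 \<le> j" "j \<le> t" "int j \<le> \<lfloor>a\<rfloor>" by auto
    then show "j \<in> {j \<in> {1..t}. real j \<le> a}" by (auto simp: le_floor_iff)
  qed
  then show ?thesis by simp
qed

definition lif_offset :: "nat \<Rightarrow> real" where
  "lif_offset T = 1 / (real T + 2)"

text \<open>The unit neuron started at \<open>lif_offset T\<close> has fired \<open>j\<close> times by time \<open>t\<close> iff its input is at
  least \<open>(j - lif_offset T) / t\<close>; the offset makes these \<open>T (T + 1) / 2\<close> breakpoints distinct.\<close>

definition lif_breakpoints :: "nat \<Rightarrow> real set" where
  "lif_breakpoints T = (\<lambda>(t, j). (real j - lif_offset T) / real t) ` (SIGMA t:{1..T}. {1..t})"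

lemma lif_offset_bounds: "0 < lif_offset T" "lif_offset T < 1" "lif_offset T * (real T + 2) = 1"
  unfolding lif_offset_def by (simp_all add: field_simps)

lemma inj_on_lif_breakpoints:
  "inj_on (\<lambda>(t, j). (real j - lif_offset T) / real t) (SIGMA t:{1..T}. {1..t})"
proof (rule inj_onI, clarify)
  fix t j t' j' :: nat
  assume h: "t \<in> {1..T}" "j \<in> {1..t}" "t' \<in> {1..T}" "j' \<in> {1..t'}"
    and eq: "(real j - lif_offset T) / real t = (real j' - lif_offset T) / real t'"
  let ?u = "lif_offset T"
  have pos: "real t > 0" "real t' > 0" using h by auto
  have e: "(real j - ?u) * real t' = (real j' - ?u) * real t"
    using eq pos by (simp add: field_simps)
  then have e2: "real_of_int (int j * int t' - int j' * int t) = ?u * (real t' - real t)"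
    by (simp add: algebra_simps)
  have "\<bar>?u * (real t' - real t)\<bar> < ?u * (real T + 2)"
    using h lif_offset_bounds(1)[of T] by (simp add: abs_mult)
  then have "\<bar>real_of_int (int j * int t' - int j' * int t)\<bar> < 1"
    using e2 lif_offset_bounds(3)[of T] by simp
  then have "int j * int t' - int j' * int t = 0" by linarith
  then have "t = t'" using e2 lif_offset_bounds(1)[of T] by simp
  then show "t = t' \<and> j = j'" using e pos by simp
qed

lemma card_lif_breakpoints: "card (lif_breakpoints T) = T * (T + 1) div 2"
proof -
  have "card (lif_breakpoints T) = card (SIGMA t:{1..T}. {1..t})"
    unfolding lif_breakpoints_def using inj_on_lif_breakpoints by (rule card_image)
  also have "\<dots> = (\<Sum>t\<in>{1..T}. card {1..t})" by (rule card_SigmaI) auto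
  also have "\<dots> = (\<Sum>t\<in>{0..T}. t)" by (simp add: sum_shift_lb_Suc0_0)
  also have "\<dots> = T * (T + 1) div 2" using gauss_sum_nat[of T] by simp
  finally show ?thesis .
qed

lemma lif_breakpoints_in_unit_interval: "c \<in> lif_breakpoints T \<Longrightarrow> 0 < c \<and> c < 1"
  unfolding lif_breakpoints_def using lif_offset_bounds(1,2)[of T]
  by (auto simp: field_simps)

lemma finite_lif_breakpoints: "finite (lif_breakpoints T)"
  unfolding lif_breakpoints_def by auto

definition rank_in :: "real set \<Rightarrow> real \<Rightarrow> nat" where
  "rank_in C v = card {c \<in> C. c \<le> v}"

lemma rank_in_lif_breakpoints:
  "rank_in (lif_breakpoints T) z = (\<Sum>t\<in>{1..T}. lif_spike_count 1 1 (lif_offset T) z t)"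
proof -
  let ?g = "\<lambda>(t, j). (real j - lif_offset T) / real t"
  have "{c \<in> lif_breakpoints T. c \<le> z} = ?g ` {p \<in> SIGMA t:{1..T}. {1..t}. ?g p \<le> z}"
    unfolding lif_breakpoints_def by auto
  then have "rank_in (lif_breakpoints T) z = card {p \<in> SIGMA t:{1..T}. {1..t}. ?g p \<le> z}"
    unfolding rank_in_def
    by (metis (no_types, lifting) card_image inj_on_lif_breakpoints inj_on_subset mem_Collect_eq subsetI)
  also have "{p \<in> SIGMA t:{1..T}. {1..t}. ?g p \<le> z}
      = (SIGMA t:{1..T}. {j \<in> {1..t}. real j \<le> lif_offset T + real t * z})"
    by (auto simp: divide_le_eq algebra_simps)
  also have "card \<dots> = (\<Sum>t\<in>{1..T}. card {j \<in> {1..t}. real j \<le> lif_offset T + real t * z})"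
    by (rule card_SigmaI) auto
  also have "\<dots> = (\<Sum>t\<in>{1..T}. lif_spike_count 1 1 (lif_offset T) z t)"
    using lif_unit_spike_count[OF less_imp_le[OF lif_offset_bounds(1)] lif_offset_bounds(2)]
    by (simp only: card_nat_le_real)
  finally show ?thesis .
qed

lemma rank_in_le: "finite C \<Longrightarrow> rank_in C v \<le> card C"
  unfolding rank_in_def by (intro card_mono) auto

lemma rank_in_mono: "finite C \<Longrightarrow> v \<le> w \<Longrightarrow> rank_in C v \<le> rank_in C w"
  unfolding rank_in_def by (intro card_mono) auto

lemma rank_in_strict_mono:
  assumes "finite C" "c \<in> C" "v < c"
  shows "rank_in C v < rank_in C c"
proof -
  have "c \<in> {c' \<in> C. c' \<le> c}" "c \<notin> {c' \<in> C. c' \<le> v}" using assms by auto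
  moreover have "{c' \<in> C. c' \<le> v} \<subseteq> {c' \<in> C. c' \<le> c}" using assms by auto
  ultimately have "{c' \<in> C. c' \<le> v} \<subset> {c' \<in> C. c' \<le> c}" by blast
  then show ?thesis unfolding rank_in_def using assms(1) by (intro psubset_card_mono) auto
qed

lemma rank_in_eqI:
  assumes "\<forall>c\<in>C. \<bar>w - v\<bar> < \<bar>v - c\<bar>"
  shows "rank_in C w = rank_in C v"
proof -
  have "{c \<in> C. c \<le> w} = {c \<in> C. c \<le> v}" using assms by force
  then show ?thesis unfolding rank_in_def by simp
qed

section \<open>Rank patterns in general position\<close>

lemma finite_pos_lower_bound:
  fixes g :: "'b \<Rightarrow> real"
  assumes "finite X" "\<forall>x\<in>X. 0 < g x"
  shows "\<exists>\<delta>>0. \<forall>x\<in>X. \<delta> < g x"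
proof -
  define m where "m = Min (insert 1 (g ` X))"
  have "0 < m" using assms unfolding m_def by (subst Min_gr_iff) auto
  moreover have "m \<le> g x" if "x \<in> X" for x using assms that unfolding m_def by simp
  ultimately show ?thesis by (intro exI[of _ "m / 2"]) force
qed

lemma rank_in_small_shift:
  fixes v b :: "nat \<Rightarrow> real"
  assumes "finite C" "finite J" "\<And>i. i \<in> J \<Longrightarrow> v i \<notin> C"
  obtains \<delta> where "\<delta> > 0" "\<And>i. i \<in> J \<Longrightarrow> rank_in C (v i - \<delta> * b i) = rank_in C (v i)"
proof -
  define g where "g x = \<bar>v (fst x) - snd x\<bar> / (\<bar>b (fst x)\<bar> + 1)" for x
  have "finite (J \<times> C)" using assms(1,2) by simp
  moreover have "\<forall>x\<in>J \<times> C. 0 < g x"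
  proof
    fix x assume "x \<in> J \<times> C"
    then have "v (fst x) \<noteq> snd x" using assms(3) by auto
    then show "0 < g x" unfolding g_def by (intro divide_pos_pos) auto
  qed
  ultimately obtain \<delta> where \<delta>: "\<delta> > 0" "\<forall>x\<in>J \<times> C. \<delta> < g x"
    using finite_pos_lower_bound by blast
  have "rank_in C (v i - \<delta> * b i) = rank_in C (v i)" if "i \<in> J" for i
  proof (rule rank_in_eqI, intro ballI)
    fix c assume "c \<in> C"
    then have "\<delta> < g (i, c)" using \<delta>(2) that by auto
    moreover have "0 < \<bar>b i\<bar> + 1" by simp
    ultimately have "\<delta> * (\<bar>b i\<bar> + 1) < \<bar>v i - c\<bar>" by (simp add: g_def pos_less_divide_eq)
    moreover have "\<bar>v i - \<delta> * b i - v i\<bar> = \<delta> * \<bar>b i\<bar>" using \<delta>(1) by (simp add: abs_mult)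
    moreover have "\<delta> * \<bar>b i\<bar> \<le> \<delta> * (\<bar>b i\<bar> + 1)" using \<delta>(1) by simp
    ultimately show "\<bar>v i - \<delta> * b i - v i\<bar> < \<bar>v i - c\<bar>" by linarith
  qed
  then show ?thesis using \<delta>(1) that by blast
qed

definition pinned :: "'a set \<Rightarrow> (nat \<Rightarrow> 'a \<Rightarrow> real) \<Rightarrow> (nat \<times> real) list \<Rightarrow> 'a set" where
  "pinned D f ps = {y \<in> D. \<forall>(i, c)\<in>set ps. f i y = c}"

lemma pinned_Nil [simp]: "pinned D f [] = D"
  unfolding pinned_def by simp

lemma pinned_Cons: "pinned D f ((i, c) # ps) = {y \<in> pinned D f ps. f i y = c}"
  unfolding pinned_def by auto

text \<open>Functions \<open>f i\<close> on \<open>D\<close> whose level sets at the values in \<open>C\<close> behave like hyperplanes in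
  general position in dimension \<open>d\<close>: any \<open>d\<close> of them can be prescribed values in \<open>C\<close>
  simultaneously, and below \<open>d\<close> prescriptions a function can be pushed below a level in \<open>C\<close>
  without changing the other prescriptions or the ranks of the earlier functions.\<close>

locale general_position =
  fixes C :: "real set" and D :: "'a set" and f :: "nat \<Rightarrow> 'a \<Rightarrow> real" and d :: nat
  assumes finite_C: "finite C"
    and pinned_nonempty: "\<And>ps. distinct (map fst ps) \<Longrightarrow> set ps \<subseteq> UNIV \<times> C \<Longrightarrow> length ps \<le> d
      \<Longrightarrow> pinned D f ps \<noteq> {}"
    and push_below: "\<And>ps m y c. distinct (map fst ps) \<Longrightarrow> \<forall>p\<in>set ps. m < fst p
      \<Longrightarrow> set ps \<subseteq> UNIV \<times> C \<Longrightarrow> length ps < d \<Longrightarrow> c \<in> C \<Longrightarrow> y \<in> pinned D f ps \<Longrightarrow> f m y = c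
      \<Longrightarrow> \<exists>y'\<in>pinned D f ps. f m y' < c \<and> (\<forall>i<m. rank_in C (f i y') = rank_in C (f i y))"
begin

abbreviation rank_pattern :: "nat \<Rightarrow> 'a \<Rightarrow> nat list" where
  "rank_pattern m \<equiv> level_pattern (\<lambda>_. rank_in C) f m"

lemma finite_rank_patterns: "finite (rank_pattern m ` E)"
  using rank_in_le[OF finite_C] by (intro finite_level_patterns) auto

lemma card_cell_ranks_ge:
  assumes ps: "distinct (map fst ps)" "\<forall>p\<in>set ps. m < fst p" "set ps \<subseteq> UNIV \<times> C" "length ps < d"
    and \<tau>: "\<tau> \<in> rank_pattern m ` pinned D f ps"
  shows "1 + card {c \<in> C. \<tau> \<in> rank_pattern m ` pinned D f ((m, c) # ps)}
    \<le> card {rank_in C (f m y) |y. y \<in> pinned D f ps \<and> rank_pattern m y = \<tau>}"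
    (is "1 + card ?K \<le> card ?V")
proof -
  have fin_V: "finite ?V"
    by (rule finite_subset[of _ "{0..card C}"]) (auto simp: rank_in_le[OF finite_C])
  have fin_K: "finite ?K" using finite_C by simp
  show ?thesis
  proof (cases "?K = {}")
    case True
    obtain y where "y \<in> pinned D f ps" "rank_pattern m y = \<tau>" using \<tau> by blast
    then have "?V \<noteq> {}" by blast
    then have "0 < card ?V" using fin_V by (simp add: card_gt_0_iff)
    moreover have "card ?K = 0" unfolding True by simp
    ultimately show ?thesis by simp
  next
    case False
    define c0 where "c0 = Min ?K"
    have c0: "c0 \<in> ?K" unfolding c0_def using fin_K False by (rule Min_in)
    have c0_le: "c0 \<le> c" if "c \<in> ?K" for c unfolding c0_def using fin_K that by (rule Min_le)
    from c0 obtain y0 where y0: "y0 \<in> pinned D f ps" "f m y0 = c0" "rank_pattern m y0 = \<tau>"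
      by (auto simp: pinned_Cons)
    obtain y' where y': "y' \<in> pinned D f ps" "f m y' < c0"
      "\<forall>i<m. rank_in C (f i y') = rank_in C (f i y0)"
      using push_below[OF ps _ y0(1,2)] c0 by auto
    have y'_in: "rank_in C (f m y') \<in> ?V"
      using y' y0(3) by (auto simp: level_pattern_eq_iff)
    have ranks_in: "rank_in C ` ?K \<subseteq> ?V"
      by (auto simp: pinned_Cons)
    have below: "rank_in C (f m y') < rank_in C c" if "c \<in> ?K" for c
      using rank_in_strict_mono[OF finite_C _ y'(2)] rank_in_mono[OF finite_C c0_le[OF that]] c0
      by fastforce
    have "inj_on (rank_in C) ?K"
      by (rule inj_onI) (metis (no_types, lifting) finite_C linorder_neq_iff mem_Collect_eq
          rank_in_strict_mono less_irrefl)
    moreover have "rank_in C (f m y') \<notin> rank_in C ` ?K"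
    proof
      assume "rank_in C (f m y') \<in> rank_in C ` ?K"
      then obtain c where "c \<in> ?K" "rank_in C (f m y') = rank_in C c" by blast
      then show False using below[of c] by simp
    qed
    ultimately have "card (insert (rank_in C (f m y')) (rank_in C ` ?K)) = 1 + card ?K"
      using fin_K by (simp add: card_image)
    moreover have "card (insert (rank_in C (f m y')) (rank_in C ` ?K)) \<le> card ?V"
      using y'_in ranks_in fin_V by (intro card_mono) auto
    ultimately show ?thesis by simp
  qed
qed

lemma card_rank_patterns_Suc_ge:
  assumes ps: "distinct (map fst ps)" "\<forall>p\<in>set ps. m < fst p" "set ps \<subseteq> UNIV \<times> C" "length ps < d"
  shows "card (rank_pattern m ` pinned D f ps) + (\<Sum>c\<in>C. card (rank_pattern m ` pinned D f ((m, c) # ps)))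
    \<le> card (rank_pattern (Suc m) ` pinned D f ps)"
proof -
  let ?E = "pinned D f ps"
  let ?K = "\<lambda>\<tau>. {c \<in> C. \<tau> \<in> rank_pattern m ` pinned D f ((m, c) # ps)}"
  let ?V = "\<lambda>\<tau>. {rank_in C (f m y) |y. y \<in> ?E \<and> rank_pattern m y = \<tau>}"
  have "(\<Sum>c\<in>C. card (rank_pattern m ` pinned D f ((m, c) # ps)))
      = (\<Sum>c\<in>C. card {\<tau> \<in> rank_pattern m ` ?E. \<tau> \<in> rank_pattern m ` pinned D f ((m, c) # ps)})"
    by (intro sum.cong refl arg_cong[where f = card]) (auto simp: pinned_Cons)
  also have "\<dots> = (\<Sum>\<tau>\<in>rank_pattern m ` ?E. card (?K \<tau>))"
    using finite_C finite_rank_patterns by (rule sum_card_filter_swap)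
  finally have swap: "(\<Sum>c\<in>C. card (rank_pattern m ` pinned D f ((m, c) # ps)))
      = (\<Sum>\<tau>\<in>rank_pattern m ` ?E. card (?K \<tau>))" .
  have "card (rank_pattern m ` ?E) + (\<Sum>c\<in>C. card (rank_pattern m ` pinned D f ((m, c) # ps)))
      = (\<Sum>\<tau>\<in>rank_pattern m ` ?E. 1 + card (?K \<tau>))"
    unfolding swap by (simp only: sum.distrib card_eq_sum)
  also have "\<dots> \<le> (\<Sum>\<tau>\<in>rank_pattern m ` ?E. card (?V \<tau>))"
    by (rule sum_mono) (rule card_cell_ranks_ge[OF ps])
  also have "\<dots> = card (rank_pattern (Suc m) ` ?E)"
    unfolding level_pattern_Suc
    by (rule card_image_snoc[symmetric, OF finite_rank_patterns])
       (rule finite_subset[of _ "{0..card C}"], auto simp: rank_in_le[OF finite_C])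
  finally show ?thesis .
qed

lemma card_rank_patterns_pinned_ge:
  "distinct (map fst ps) \<Longrightarrow> \<forall>p\<in>set ps. m \<le> fst p \<Longrightarrow> set ps \<subseteq> UNIV \<times> C \<Longrightarrow> length ps \<le> d
   \<Longrightarrow> arrangement_bound (card C) (d - length ps) m \<le> card (rank_pattern m ` pinned D f ps)"
proof (induction m arbitrary: ps)
  case 0
  then have "pinned D f ps \<noteq> {}" by (intro pinned_nonempty) auto
  then have "rank_pattern 0 ` pinned D f ps = {[]}" by (auto simp: level_pattern_def)
  then show ?case by simp
next
  case (Suc m)
  have ps: "distinct (map fst ((m, c) # ps))" "\<forall>p\<in>set ((m, c) # ps). m \<le> fst p" "\<forall>p\<in>set ps. m < fst p"
    for c using Suc.prems by (auto simp: Suc_le_eq)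
  show ?case
  proof (cases "length ps = d")
    case True
    then show ?thesis
      using pinned_nonempty Suc.prems finite_rank_patterns by (auto simp: Suc_le_eq card_gt_0_iff)
  next
    case False
    then have "length ps < d" using Suc.prems(4) by simp
    define d' where "d' = d - Suc (length ps)"
    have d': "d - length ps = Suc d'" "d - length ((m, c) # ps) = d'" for c
      using \<open>length ps < d\<close> by (simp_all add: d'_def Suc_diff_Suc)
    have "arrangement_bound (card C) (Suc d') (Suc m)
        = arrangement_bound (card C) (Suc d') m + (\<Sum>c\<in>C. arrangement_bound (card C) d' m)"
      by (simp add: arrangement_bound_Suc_Suc)
    also have "\<dots> \<le> card (rank_pattern m ` pinned D f ps)
        + (\<Sum>c\<in>C. card (rank_pattern m ` pinned D f ((m, c) # ps)))"
      using Suc.IH[of ps] Suc.IH[of "(m, _) # ps"] Suc.prems ps d' False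
      by (intro add_mono sum_mono) (auto simp: Suc_le_eq)
    also have "\<dots> \<le> card (rank_pattern (Suc m) ` pinned D f ps)"
      using Suc.prems \<open>length ps < d\<close> ps(3) by (intro card_rank_patterns_Suc_ge) auto
    finally show ?thesis using d' by simp
  qed
qed

lemma card_rank_patterns_ge: "arrangement_bound (card C) d m \<le> card (rank_pattern m ` D)"
  using card_rank_patterns_pinned_ge[of "[]"] by simp

end

section \<open>Moment forms and extremal parameters\<close>

definition low_degree_polys :: "nat \<Rightarrow> real poly set" where
  "low_degree_polys d = {q. \<forall>j\<ge>d. coeff q j = 0}"

text \<open>The input of first-layer neuron \<open>i\<close> for weights \<open>(d + 1) i^j\<close>, bias \<open>-(d + 1) i^d\<close> and the
  coefficient vector of \<open>q\<close> as input: the normals \<open>(1, i, \<dots>, i^(d-1))\<close> lie on the moment curve.\<close>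

definition moment_form :: "nat \<Rightarrow> nat \<Rightarrow> real poly \<Rightarrow> real" where
  "moment_form d i q = (real d + 1) * (poly q (real i) - real i ^ d)"

definition vanishing_poly :: "nat set \<Rightarrow> real poly" where
  "vanishing_poly N = (\<Prod>l\<in>N. [:- real l, 1:])"

lemma poly_vanishing_poly: "poly (vanishing_poly N) x = (\<Prod>l\<in>N. x - real l)"
  unfolding vanishing_poly_def by (simp add: poly_prod)

lemma degree_vanishing_poly: "finite N \<Longrightarrow> degree (vanishing_poly N) = card N"
  unfolding vanishing_poly_def by (subst degree_prod_eq_sum_degree) auto

lemma coeff_vanishing_poly_above: "finite N \<Longrightarrow> card N < k \<Longrightarrow> coeff (vanishing_poly N) k = 0"
  by (simp add: coeff_eq_0 degree_vanishing_poly)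

lemma coeff_vanishing_poly_card: "finite N \<Longrightarrow> coeff (vanishing_poly N) (card N) = 1"
  using lead_coeff_prod[of "\<lambda>l. [:- real l, 1:]" N]
  by (simp add: vanishing_poly_def degree_vanishing_poly[symmetric, unfolded vanishing_poly_def])

lemma vanishing_poly_root_iff: "finite N \<Longrightarrow> poly (vanishing_poly N) (real i) = 0 \<longleftrightarrow> i \<in> N"
  unfolding poly_vanishing_poly by simp

lemma low_degree_interpolant_exists:
  assumes "finite N" "card N \<le> d"
  shows "\<exists>q\<in>low_degree_polys d. \<forall>i\<in>N. poly q (real i) = val i"
  using assms
proof (induction N rule: finite_induct)
  case empty
  show ?case by (rule bexI[of _ 0]) (auto simp: low_degree_polys_def)
next
  case (insert k N)
  then obtain q where q: "q \<in> low_degree_polys d" "\<forall>i\<in>N. poly q (real i) = val i" by auto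
  let ?w = "vanishing_poly N"
  have "poly ?w (real k) \<noteq> 0" using insert by (simp add: vanishing_poly_root_iff)
  moreover have "coeff ?w j = 0" if "d \<le> j" for j
    using insert that by (intro coeff_vanishing_poly_above) auto
  ultimately show ?case using q insert
    by (intro bexI[of _ "q + smult ((val k - poly q (real k)) / poly ?w (real k)) ?w"])
       (auto simp: low_degree_polys_def vanishing_poly_root_iff)
qed

text \<open>Compare \<open>r\<close> with its Lagrange interpolant at the \<open>d + 1\<close> nodes.\<close>

lemma coeff_eq_divided_difference:
  fixes r :: "real poly"
  assumes N: "finite N" "card N = Suc d" and r: "\<forall>k>d. coeff r k = 0"
  shows "coeff r d = (\<Sum>j\<in>N. poly r (real j) / (\<Prod>l\<in>N - {j}. real j - real l))"
proof -
  define cf where "cf j = poly r (real j) / (\<Prod>l\<in>N - {j}. real j - real l)" for j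
  define L where "L = (\<Sum>j\<in>N. smult (cf j) (vanishing_poly (N - {j})))"
  have card_N_j: "card (N - {j}) = d" if "j \<in> N" for j using N that by simp
  have L_r: "poly L (real i) = poly r (real i)" if "i \<in> N" for i
  proof -
    have "poly L (real i) = (\<Sum>j\<in>N. cf j * poly (vanishing_poly (N - {j})) (real i))"
      unfolding L_def by (simp add: poly_sum)
    also have "\<dots> = cf i * poly (vanishing_poly (N - {i})) (real i)
        + (\<Sum>j\<in>N - {i}. cf j * poly (vanishing_poly (N - {j})) (real i))"
      using N that by (simp add: sum.remove)
    also have "(\<Sum>j\<in>N - {i}. cf j * poly (vanishing_poly (N - {j})) (real i)) = 0"
      using N that by (intro sum.neutral) (auto simp: vanishing_poly_root_iff)
    also have "cf i * poly (vanishing_poly (N - {i})) (real i) = poly r (real i)"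
      using N unfolding cf_def poly_vanishing_poly by simp
    finally show ?thesis by simp
  qed
  have "coeff L k = 0" if "k > d" for k
    unfolding L_def coeff_sum using N that card_N_j
    by (intro sum.neutral) (auto simp: coeff_vanishing_poly_above)
  then have "degree L < card (real ` N)" using N by (simp add: card_image degree_le less_Suc_eq_le)
  moreover have "degree r < card (real ` N)" using r N by (simp add: card_image degree_le less_Suc_eq_le)
  ultimately have "r = L" using L_r by (intro poly_eqI_degree[of "real ` N"]) auto
  then have "coeff r d = (\<Sum>j\<in>N. cf j * coeff (vanishing_poly (N - {j})) d)"
    unfolding L_def by (simp add: coeff_sum)
  also have "\<dots> = (\<Sum>j\<in>N. cf j)"
    using N by (intro sum.cong refl) (metis card_N_j coeff_vanishing_poly_card finite_Diff mult.right_neutral)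
  finally show ?thesis unfolding cf_def .
qed

text \<open>If \<open>d + 1\<close> moment forms had values in \<open>(0, 1)\<close>, the monic polynomial \<open>X^d - q\<close> would be
  smaller than \<open>1 / (d + 1)\<close> in absolute value at \<open>d + 1\<close> integers, contradicting the divided
  difference formula for its leading coefficient \<open>1\<close>.\<close>

lemma card_moment_forms_in_unit_interval:
  assumes q: "q \<in> low_degree_polys d" and "finite N"
    and in01: "\<forall>i\<in>N. 0 < moment_form d i q \<and> moment_form d i q < 1"
  shows "card N \<le> d"
proof (rule ccontr)
  assume "\<not> card N \<le> d"
  then obtain N' where N': "N' \<subseteq> N" "card N' = Suc d" "finite N'"
    by (metis not_less_eq_eq obtain_subset_with_card_n)
  define r where "r = monom 1 d - q"
  have "\<forall>k>d. coeff r k = 0" using q unfolding r_def low_degree_polys_def by auto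
  moreover have "coeff r d = 1" using q unfolding r_def low_degree_polys_def by simp
  ultimately have "1 = (\<Sum>j\<in>N'. poly r (real j) / (\<Prod>l\<in>N' - {j}. real j - real l))"
    using coeff_eq_divided_difference[OF N'(3,2)] by simp
  also have "\<dots> \<le> (\<Sum>j\<in>N'. \<bar>poly r (real j) / (\<Prod>l\<in>N' - {j}. real j - real l)\<bar>)"
    by (intro sum_mono abs_ge_self)
  also have "\<dots> \<le> (\<Sum>j\<in>N'. \<bar>poly r (real j)\<bar>)"
  proof (intro sum_mono)
    fix j
    have "1 \<le> (\<Prod>l\<in>N' - {j}. \<bar>real j - real l\<bar>)"
    proof (rule prod_ge_1)
      fix l assume "l \<in> N' - {j}"
      then have "l \<noteq> j" by auto
      then show "1 \<le> \<bar>real j - real l\<bar>" by linarith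
    qed
    then have "\<bar>poly r (real j)\<bar> / \<bar>\<Prod>l\<in>N' - {j}. real j - real l\<bar> \<le> \<bar>poly r (real j)\<bar> / 1"
      by (intro divide_left_mono) (auto simp: abs_prod)
    then show "\<bar>poly r (real j) / (\<Prod>l\<in>N' - {j}. real j - real l)\<bar> \<le> \<bar>poly r (real j)\<bar>"
      by simp
  qed
  also have "\<dots> < (\<Sum>j\<in>N'. 1 / (real d + 1))"
  proof (rule sum_strict_mono)
    fix j assume "j \<in> N'"
    then have "0 < moment_form d j q" "moment_form d j q < 1" using in01 N'(1) by auto
    moreover have "poly r (real j) = - moment_form d j q / (real d + 1)"
      unfolding r_def moment_form_def by (simp add: poly_monom field_simps)
    ultimately show "\<bar>poly r (real j)\<bar> < 1 / (real d + 1)"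
      by (simp add: divide_strict_right_mono)
  qed (use N' in auto)
  also have "\<dots> = 1" using N' by simp
  finally show False by simp
qed

lemma moment_forms_pinned_nonempty:
  assumes "distinct (map fst ps)" "length ps \<le> d"
  shows "pinned (low_degree_polys d) (moment_form d) ps \<noteq> {}"
proof -
  let ?N = "fst ` set ps"
  have "card ?N \<le> d" using distinct_card[OF assms(1)] assms(2) by simp
  then obtain q where q: "q \<in> low_degree_polys d"
    "\<forall>i\<in>?N. poly q (real i) = real i ^ d + the (map_of ps i) / (real d + 1)"
    using low_degree_interpolant_exists[of ?N d "\<lambda>i. real i ^ d + the (map_of ps i) / (real d + 1)"]
    by auto
  have "moment_form d i q = c" if "(i, c) \<in> set ps" for i c
  proof -
    have "map_of ps i = Some c" using assms(1) that by (rule map_of_is_SomeI)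
    moreover have "i \<in> ?N" using that by force
    then have "poly q (real i) = real i ^ d + the (map_of ps i) / (real d + 1)"
      using q(2) by blast
    ultimately have "poly q (real i) - real i ^ d = c / (real d + 1)" by simp
    moreover have "real d + 1 \<noteq> 0" by linarith
    ultimately show ?thesis by (simp add: moment_form_def)
  qed
  then have "q \<in> pinned (low_degree_polys d) (moment_form d) ps"
    using q(1) by (auto simp: pinned_def)
  then show ?thesis by auto
qed

lemma moment_forms_push_below:
  assumes C: "finite C" "\<forall>c\<in>C. 0 < c \<and> c < 1"
    and ps: "\<forall>p\<in>set ps. m < fst p" "set ps \<subseteq> UNIV \<times> C" "length ps < d"
    and q: "q \<in> pinned (low_degree_polys d) (moment_form d) ps" "moment_form d m q \<in> C"
  shows "\<exists>q'\<in>pinned (low_degree_polys d) (moment_form d) ps. moment_form d m q' < moment_form d m q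
    \<and> (\<forall>i<m. rank_in C (moment_form d i q') = rank_in C (moment_form d i q))"
proof -
  let ?f = "\<lambda>i. moment_form d i q"
  define S where "S = {i. i < m \<and> ?f i \<in> C} \<union> fst ` set ps"
  have "q \<in> low_degree_polys d" using q by (simp add: pinned_def)
  moreover have "?f i \<in> C" if "i \<in> insert m S" for i
    using that q ps(2) by (auto simp: S_def pinned_def)
  ultimately have "card (insert m S) \<le> d"
    using C(2) by (intro card_moment_forms_in_unit_interval) (auto simp: S_def)
  moreover have "finite S" unfolding S_def by auto
  ultimately have "\<exists>p\<in>low_degree_polys d. \<forall>i\<in>insert m S. poly p (real i) = of_bool (i = m)"
    by (intro low_degree_interpolant_exists) auto
  then obtain p where p: "p \<in> low_degree_polys d" "\<forall>i\<in>insert m S. poly p (real i) = of_bool (i = m)"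
    by blast
  define s where "s = real d + 1"
  have shift: "moment_form d i (q - smult \<delta> p) = ?f i - \<delta> * (s * poly p (real i))" for i \<delta>
    by (simp add: moment_form_def s_def algebra_simps)
  have "finite {i. i < m \<and> ?f i \<notin> C}" by simp
  then obtain \<delta> where \<delta>: "\<delta> > 0"
    "\<And>i. i \<in> {i. i < m \<and> ?f i \<notin> C} \<Longrightarrow>
       rank_in C (?f i - \<delta> * (s * poly p (real i))) = rank_in C (?f i)"
    using rank_in_small_shift[where C = C and v = ?f and b = "\<lambda>i. s * poly p (real i)"] C(1) by blast
  have "rank_in C (moment_form d i (q - smult \<delta> p)) = rank_in C (?f i)" if "i < m" for i
  proof (cases "?f i \<in> C")
    case True
    then show ?thesis using p that by (simp add: S_def shift)
  next
    case False
    then show ?thesis using \<delta>(2)[of i] that by (simp add: shift)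
  qed
  moreover have "q - smult \<delta> p \<in> pinned (low_degree_polys d) (moment_form d) ps"
  proof -
    have "q - smult \<delta> p \<in> low_degree_polys d"
      using q(1) p(1) by (simp add: pinned_def low_degree_polys_def)
    moreover have "moment_form d i (q - smult \<delta> p) = c" if "(i, c) \<in> set ps" for i c
    proof -
      have "i \<in> S" "i \<noteq> m" using that ps(1) unfolding S_def by force+
      then have "poly p (real i) = 0" using p(2) by simp
      moreover have "?f i = c" using q(1) that by (auto simp: pinned_def)
      ultimately show ?thesis by (simp add: shift)
    qed
    ultimately show ?thesis by (auto simp: pinned_def)
  qed
  moreover have "moment_form d m (q - smult \<delta> p) < ?f m" using p \<delta>(1) by (simp add: shift s_def)
  ultimately show ?thesis by blast
qed

lemma general_position_moment_forms:
  assumes "finite C" "\<forall>c\<in>C. 0 < c \<and> c < 1"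
  shows "general_position C (low_degree_polys d) (moment_form d) d"
  using assms moment_forms_pinned_nonempty moment_forms_push_below
  by unfold_locales blast+

text \<open>Parameters attaining the bound: the unit neuron with offset \<open>1 / (T + 2)\<close> in every first-layer
  position, fed the moment forms; the deeper layers are irrelevant.\<close>

definition extremal_params :: "nat \<Rightarrow> nat \<Rightarrow> snn_params" where
  "extremal_params n_in T = \<lparr>
     snn_W = (\<lambda>l i j. if l = 1 then (real n_in + 1) * real i ^ j else 0),
     snn_b = (\<lambda>l i. if l = 1 then - ((real n_in + 1) * real i ^ n_in) else 0),
     snn_u0 = (\<lambda>l i. if l = 1 then lif_offset T else 0),
     snn_beta = (\<lambda>l. if l = 1 then 1 else 0),
     snn_thr = (\<lambda>l. 1),
     snn_a = (\<lambda>_. 0), snn_V = (\<lambda>_ _. 0), snn_c = (\<lambda>_. 0) \<rparr>"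

lemma snn_valid_extremal_params: "snn_valid ns (extremal_params n_in T)"
  unfolding snn_valid_def extremal_params_def by auto

lemma extremal_params_neuron:
  "snn_beta (extremal_params n_in T) l = (if l = 1 then 1 else 0)"
  "snn_thr (extremal_params n_in T) l = 1"
  "snn_u0 (extremal_params n_in T) l i = (if l = 1 then lif_offset T else 0)"
  by (simp_all add: extremal_params_def)

lemma poly_low_degree:
  assumes "q \<in> low_degree_polys d"
  shows "poly q t = (\<Sum>j<d. coeff q j * t ^ j)"
proof (cases "q = 0")
  case False
  have "degree q < d"
  proof (rule ccontr)
    assume "\<not> degree q < d"
    then have "coeff q (degree q) = 0" using assms unfolding low_degree_polys_def by simp
    then show False using False by simp
  qed
  then have "(\<Sum>j\<le>degree q. coeff q j * t ^ j) = (\<Sum>j<d. coeff q j * t ^ j)"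
    by (intro sum.mono_neutral_left) (auto simp: coeff_eq_0)
  then show ?thesis by (simp add: poly_altdef)
qed simp

lemma layer1_input_extremal_params:
  assumes "q \<in> low_degree_polys n_in"
  shows "layer1_input (extremal_params n_in T) n_in (map (coeff q) [0..<n_in]) i = moment_form n_in i q"
proof -
  have "layer1_input (extremal_params n_in T) n_in (map (coeff q) [0..<n_in]) i
      = (\<Sum>j<n_in. (real n_in + 1) * real i ^ j * coeff q j) - (real n_in + 1) * real i ^ n_in"
    unfolding layer1_input_def extremal_params_def by simp
  also have "\<dots> = (real n_in + 1) * ((\<Sum>j<n_in. coeff q j * real i ^ j) - real i ^ n_in)"
    by (simp add: sum_distrib_left algebra_simps)
  finally show ?thesis unfolding moment_form_def poly_low_degree[OF assms] .
qed

lemma rank_in_breakpoints_eq_if_pattern_eq: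
  assumes "snn_pattern (extremal_params n_in T) n_in ns T x = snn_pattern (extremal_params n_in T) n_in ns T y"
    and "i < hd ns"
  shows "rank_in (lif_breakpoints T) (layer1_input (extremal_params n_in T) n_in x i)
    = rank_in (lif_breakpoints T) (layer1_input (extremal_params n_in T) n_in y i)"
proof -
  let ?P = "extremal_params n_in T"
  have fires: "lif_fires 1 1 (lif_offset T) (layer1_input ?P n_in x i) k
      \<longleftrightarrow> lif_fires 1 1 (lif_offset T) (layer1_input ?P n_in y i) k" if "k < T" for k
    using assms that unfolding snn_pattern_eq_iff by (simp add: extremal_params_neuron)
  have "lif_spike_count 1 1 (lif_offset T) (layer1_input ?P n_in x i) t
      = lif_spike_count 1 1 (lif_offset T) (layer1_input ?P n_in y i) t" if "t \<le> T" for t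
    using that
  proof (induction t)
    case (Suc t)
    then show ?case using fires[of t] by simp
  qed simp
  then show ?thesis unfolding rank_in_lif_breakpoints by (intro sum.cong) auto
qed

lemma card_activation_regions_extremal_params:
  assumes "ns \<noteq> []"
  shows "card (activation_regions (extremal_params n_in T) n_in ns T)
    = arrangement_bound (T * (T + 1) div 2) n_in (hd ns)"
proof (rule antisym)
  let ?P = "extremal_params n_in T" and ?C = "lif_breakpoints T"
  interpret general_position ?C "low_degree_polys n_in" "moment_form n_in" n_in
    using finite_lif_breakpoints lif_breakpoints_in_unit_interval
    by (intro general_position_moment_forms) auto
  let ?pat = "level_pattern (\<lambda>_. rank_in ?C) (\<lambda>i x. layer1_input ?P n_in x i) (hd ns)"
  have "arrangement_bound (T * (T + 1) div 2) n_in (hd ns)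
      \<le> card (rank_pattern (hd ns) ` low_degree_polys n_in)"
    using card_rank_patterns_ge by (simp add: card_lif_breakpoints)
  also have "\<dots> \<le> card (?pat ` snn_inputs n_in)"
  proof (rule card_mono)
    show "finite (?pat ` snn_inputs n_in)"
      using rank_in_le[OF finite_lif_breakpoints] by (intro finite_level_patterns) auto
    show "rank_pattern (hd ns) ` low_degree_polys n_in \<subseteq> ?pat ` snn_inputs n_in"
    proof
      fix w assume "w \<in> rank_pattern (hd ns) ` low_degree_polys n_in"
      then obtain q where q: "q \<in> low_degree_polys n_in" "w = rank_pattern (hd ns) q" by blast
      then have "w = ?pat (map (coeff q) [0..<n_in])"
        by (simp add: level_pattern_def layer1_input_extremal_params)
      moreover have "map (coeff q) [0..<n_in] \<in> snn_inputs n_in" by (simp add: snn_inputs_def)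
      ultimately show "w \<in> ?pat ` snn_inputs n_in" by blast
    qed
  qed
  also have "\<dots> \<le> card (snn_pattern ?P n_in ns T ` snn_inputs n_in)"
  proof (rule card_image_le_if_factors[OF finite_snn_patterns])
    fix x y assume "snn_pattern ?P n_in ns T x = snn_pattern ?P n_in ns T y"
    then show "?pat x = ?pat y"
      unfolding level_pattern_eq_iff by (blast intro: rank_in_breakpoints_eq_if_pattern_eq)
  qed
  finally show "arrangement_bound (T * (T + 1) div 2) n_in (hd ns)
      \<le> card (activation_regions ?P n_in ns T)" by (simp add: card_activation_regions)
qed (rule card_activation_regions_le[OF assms snn_valid_extremal_params])

lemma region_bound_eq_arrangement_bound:
  "region_bound T n_in n1 = real (arrangement_bound (T * (T + 1) div 2) n_in n1)"
proof -
  define K where "K = T * (T + 1) div 2"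
  have "even (T * (T + 1))" by simp
  then have "2 * (T * (T + 1) div 2) = T * (T + 1)" by simp
  then have "2 * real K = real T * (real T + 1)"
    unfolding K_def by (metis of_nat_mult of_nat_numeral of_nat_add of_nat_1)
  then have K: "real K = (real T ^ 2 + real T) / 2" by (simp add: power2_eq_square algebra_simps)
  show ?thesis
  proof (cases "n_in \<le> n1")
    case True
    have "real (arrangement_bound K n_in n1) = (\<Sum>i=0..n_in. real K ^ i * real (n1 choose i))"
      unfolding arrangement_bound_def by (simp add: atMost_atLeast0)
    then show ?thesis using True unfolding K_def[symmetric] by (simp add: region_bound_def K)
  next
    case False
    have "arrangement_bound K n_in n1 = (\<Sum>j\<le>n1. K ^ j * (n1 choose j))"
      unfolding arrangement_bound_def using False by (intro sum.mono_neutral_right) auto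
    also have "\<dots> = (K + 1) ^ n1"
      using binomial_ring[of K 1 n1] by (simp add: mult.commute)
    finally have "real (arrangement_bound K n_in n1) = ((real T ^ 2 + real T + 2) / 2) ^ n1"
      by (simp add: K field_simps)
    then show ?thesis using False unfolding K_def[symmetric] by (simp add: region_bound_def)
  qed
qed

lemma Max_param_le:
  assumes "\<And>P. V P \<Longrightarrow> g P \<le> (B :: nat)" "V P0"
  shows "Max {g P |P. V P} \<le> B"
  using assms by (intro Max.boundedI) (auto intro: finite_subset[of _ "{..B}"])

lemma Max_param_ge:
  assumes "\<And>P. V P \<Longrightarrow> g P \<le> (B :: nat)" "V P0"
  shows "g P0 \<le> Max {g P |P. V P}"
  using assms by (intro Max_ge) (auto intro: finite_subset[of _ "{..B}"])

lemma card_constant_regions_le: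
  assumes "ns \<noteq> []" "snn_valid ns P"
  shows "card (constant_regions P n_in ns n_out T) \<le> arrangement_bound (T * (T + 1) div 2) n_in (hd ns)"
  using card_constant_regions_le_activation_regions[OF assms(1)] card_activation_regions_le[OF assms]
  by (rule order_trans)

lemma max_activation_regions_eq:
  assumes "ns \<noteq> []"
  shows "max_activation_regions n_in ns T = arrangement_bound (T * (T + 1) div 2) n_in (hd ns)"
proof -
  let ?act = "\<lambda>P. card (activation_regions P n_in ns T)"
  note bounded = card_activation_regions_le[OF assms]
  show ?thesis
    unfolding max_activation_regions_def
    using Max_param_le[where V = "snn_valid ns" and g = ?act, OF bounded snn_valid_extremal_params[of ns n_in T]]
      Max_param_ge[where V = "snn_valid ns" and g = ?act, OF bounded snn_valid_extremal_params[of ns n_in T]]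
      card_activation_regions_extremal_params[OF assms]
    by simp
qed

lemma max_constant_regions_le:
  assumes "ns \<noteq> []"
  shows "max_constant_regions n_in ns n_out T \<le> arrangement_bound (T * (T + 1) div 2) n_in (hd ns)"
  unfolding max_constant_regions_def
  by (rule Max_param_le[where V = "snn_valid ns" and g = "\<lambda>P. card (constant_regions P n_in ns n_out T)"])
    (rule card_constant_regions_le[OF assms], assumption, rule snn_valid_extremal_params[of ns n_in T])

lemma max_constant_regions_ge:
  assumes "ns \<noteq> []" "\<forall>n\<in>set ns. hd ns \<le> n" "1 \<le> n_out"
  shows "arrangement_bound (T * (T + 1) div 2) n_in (hd ns) \<le> max_constant_regions n_in ns n_out T"
proof -
  let ?E = "extremal_params n_in T"
  have "arrangement_bound (T * (T + 1) div 2) n_in (hd ns) = card (activation_regions ?E n_in ns T)"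
    using card_activation_regions_extremal_params[OF assms(1)] by simp
  also have "\<dots> \<le> card (constant_regions (relay_params ?E (hd ns)) n_in ns n_out T)"
    by (rule card_activation_regions_le_relay_params[OF assms])
  also have "\<dots> \<le> max_constant_regions n_in ns n_out T"
    unfolding max_constant_regions_def
    by (rule Max_param_ge[where V = "snn_valid ns" and g = "\<lambda>P. card (constant_regions P n_in ns n_out T)"])
      (rule card_constant_regions_le[OF assms(1)], assumption,
       rule snn_valid_relay_params[OF snn_valid_extremal_params])
  finally show ?thesis .
qed

theorem theoremB19:
  fixes T n_in n_out :: nat and ns :: "nat list"
  assumes "ns \<noteq> []" and "n_out \<ge> 1"
  shows "max_constant_regions n_in ns n_out T \<le> max_activation_regions n_in ns T
       \<and> real (max_activation_regions n_in ns T) \<le> region_bound T n_in (hd ns)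
       \<and> ((\<forall>n\<in>set ns. hd ns \<le> n) \<longrightarrow>
            max_constant_regions n_in ns n_out T = max_activation_regions n_in ns T)
       \<and> (\<exists>P. snn_valid ns P \<and>
            real (card (activation_regions P n_in ns T)) = region_bound T n_in (hd ns))"
proof -
  note max_act = max_activation_regions_eq[OF assms(1), where n_in = n_in and T = T]
  note max_const = max_constant_regions_le[OF assms(1), where n_in = n_in and n_out = n_out and T = T]
  show ?thesis
  proof (intro conjI impI)
    show "max_constant_regions n_in ns n_out T \<le> max_activation_regions n_in ns T"
      using max_act max_const by simp
    show "real (max_activation_regions n_in ns T) \<le> region_bound T n_in (hd ns)"
      using max_act by (simp add: region_bound_eq_arrangement_bound)
    show "max_constant_regions n_in ns n_out T = max_activation_regions n_in ns T"
      if "\<forall>n\<in>set ns. hd ns \<le> n"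
      using max_act max_const max_constant_regions_ge[OF assms(1) that assms(2), where n_in = n_in and T = T] by simp
    show "\<exists>P. snn_valid ns P \<and> real (card (activation_regions P n_in ns T)) = region_bound T n_in (hd ns)"
      using snn_valid_extremal_params[of ns n_in T] card_activation_regions_extremal_params[OF assms(1)]
      by (auto simp: region_bound_eq_arrangement_bound)
  qed
qed

end
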